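(* Let $D\ge1$, $q\ge2$, consider the Hamming scheme $\mathrm H(D,q)$ on $X=\mathcal Q^D$, and let $x=(0,\dots,0)$. Let $Y\subseteq X$ with $1<|Y|<|X|$, $\chi=\chi_Y$, $\delta_x=\delta_x(\chi)$, $\delta^*=\delta^*(\chi)$. Suppose $t\in\{1,\dots,D\}$ is such that for every $1\le r\le t$ at least one of $$|\{r\le j\le D-r:E_j\chi\ne0\}|\le\delta_x-r,\qquad |\{r\le i\le D-r:E_i^*(x)\chi\ne0\}|\le\delta^*-r$$ holds. Then for every $0\le k\le D$, the number of words $y\in Y$ of Hamming weight $k$ whose support is disjoint from a given $t$-subset $S\subseteq\{1,\dots,D\}$ does not depend on $S$; consequently, the supports of the words of weight $k$ in $Y$ (counted with multiplicity) form a $t$-design on the point set $\{1,\dots,D\}$ (whenever there is at least one such word). In particular this holds without assuming $Y$ is linear.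
   Context: $\mathcal Q=\{0,\dots,q-1\}$. The Hamming scheme $\mathrm H(D,q)$ has relations $R_i=\{(u,v):u,v\text{ differ in exactly }i\text{ coordinates}\}$, associate matrices $A_i$, and primitive idempotents $E_0=|X|^{-1}J,E_1,\dots,E_D$ in the standard (Krawtchouk) cometric ordering. $V=\mathbb C^X$, $\chi_Y=\sum_{y\in Y}\hat y$. $E_i^*(x)$ is the diagonal matrix with $(E_i^*(x))_{yy}=1$ if $y$ differs from $x$ in exactly $i$ coordinates and $0$ otherwise. $\delta_x(\chi)=\min\{i\ne0:E_i^*(x)\chi\ne0\}$, $\delta^*(\chi)=\min\{j\ne0:E_j\chi\ne0\}$. The support of a word is the set of its nonzero coordinates. A (multiset) family of $k$-subsets of a $D$-set is a $t$-design if every $t$-subset is contained in the same number of members. *)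

theory Defs
  imports Complex_Main
begin

text \<open>Words of the Hamming scheme H(D,q): functions on coordinates 0..D-1 with
  values in {0..q-1}, extended by 0 outside the coordinate range.\<close>
definition hamming_space :: "nat \<Rightarrow> nat \<Rightarrow> (nat \<Rightarrow> nat) set" where
  "hamming_space D q = {u. (\<forall>i<D. u i < q) \<and> (\<forall>i\<ge>D. u i = 0)}"

definition hdist :: "nat \<Rightarrow> (nat \<Rightarrow> nat) \<Rightarrow> (nat \<Rightarrow> nat) \<Rightarrow> nat" where
  "hdist D u v = card {i. i < D \<and> u i \<noteq> v i}"

definition word_support :: "nat \<Rightarrow> (nat \<Rightarrow> nat) \<Rightarrow> nat set" where
  "word_support D u = {i. i < D \<and> u i \<noteq> 0}"

definition hweight :: "nat \<Rightarrow> (nat \<Rightarrow> nat) \<Rightarrow> nat" where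
  "hweight D u = card (word_support D u)"

definition krawtchouk :: "nat \<Rightarrow> nat \<Rightarrow> nat \<Rightarrow> nat \<Rightarrow> complex" where
  "krawtchouk D q j i =
     (\<Sum>h=0..j. (-1) ^ h * (of_nat q - 1) ^ (j - h) * of_nat (i choose h) * of_nat ((D - i) choose (j - h)))"

text \<open>Primitive idempotent E_j (Krawtchouk/cometric ordering):
  E_j = |X|^{-1} sum_i K_j(i) A_i, applied to a vector f in C^X.\<close>
definition prim_idem :: "nat \<Rightarrow> nat \<Rightarrow> nat \<Rightarrow> ((nat \<Rightarrow> nat) \<Rightarrow> complex) \<Rightarrow> ((nat \<Rightarrow> nat) \<Rightarrow> complex)" where
  "prim_idem D q j f = (\<lambda>u. if u \<in> hamming_space D q then
      (1 / of_nat (q ^ D)) * (\<Sum>v\<in>hamming_space D q. krawtchouk D q j (hdist D u v) * f v)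
    else 0)"

definition dual_idem :: "nat \<Rightarrow> nat \<Rightarrow> (nat \<Rightarrow> nat) \<Rightarrow> nat \<Rightarrow> ((nat \<Rightarrow> nat) \<Rightarrow> complex) \<Rightarrow> ((nat \<Rightarrow> nat) \<Rightarrow> complex)" where
  "dual_idem D q x i f = (\<lambda>y. if y \<in> hamming_space D q \<and> hdist D x y = i then f y else 0)"

definition char_vec :: "nat \<Rightarrow> nat \<Rightarrow> (nat \<Rightarrow> nat) set \<Rightarrow> ((nat \<Rightarrow> nat) \<Rightarrow> complex)" where
  "char_vec D q Y = (\<lambda>y. if y \<in> hamming_space D q \<and> y \<in> Y then 1 else 0)"

definition delta_x :: "nat \<Rightarrow> nat \<Rightarrow> (nat \<Rightarrow> nat) \<Rightarrow> ((nat \<Rightarrow> nat) \<Rightarrow> complex) \<Rightarrow> nat" where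
  "delta_x D q x f = (LEAST i. i \<noteq> 0 \<and> i \<le> D \<and> dual_idem D q x i f \<noteq> (\<lambda>_. 0))"

definition delta_star :: "nat \<Rightarrow> nat \<Rightarrow> ((nat \<Rightarrow> nat) \<Rightarrow> complex) \<Rightarrow> nat" where
  "delta_star D q f = (LEAST j. j \<noteq> 0 \<and> j \<le> D \<and> prim_idem D q j f \<noteq> (\<lambda>_. 0))"

definition is_t_design :: "nat set \<Rightarrow> nat \<Rightarrow> 'b set \<Rightarrow> ('b \<Rightarrow> nat set) \<Rightarrow> bool" where
  "is_t_design P t B blk =
     (\<forall>T T'. T \<subseteq> P \<and> card T = t \<and> T' \<subseteq> P \<and> card T' = t \<longrightarrow>
        card {b\<in>B. T \<subseteq> blk b} = card {b\<in>B. T' \<subseteq> blk b})"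

end

theory Submission
  imports Defs "HOL-Library.FuncSet" "HOL-Combinatorics.Transposition"
begin

(* Record Y by the numbers F A of its words with support A. Then E_i^*(x) chi = 0 says that F
   vanishes on the i-sets of coordinates, E_j chi = 0 says that a MacWilliams-type transform of F
   vanishes on the j-sets, and A_1 acts on F by an operator that this transform diagonalizes,
   with eigenvalues theta_j.

   Antisymmetrize F under disjoint transpositions (a_1 b_1) ... (a_r b_r) and sum it over the
   k-sets containing every a_i and no b_i. A factor A_1 - c lowers the lowest nonvanishing level
   of these sums by exactly one, while the hypothesis for r provides, for F or for its transform,
   a polynomial of degree m in A_1 annihilating the antisymmetrization together with vanishing
   below level r + m; hence all these sums vanish. For a pair (a b) this says that exchanging
   a in S for b does not change the number of weight-k words whose supports avoid (or contain) S,
   provided the same holds for S - {a} with one more pair; induction on |S| and the connectivity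
   of the Johnson graph give the theorem. *)

lemma transpose_image_involutory [simp]: "transpose a b ` transpose a b ` A = A"
  by (simp add: image_image)

lemma card_transpose_image [simp]: "card (transpose a b ` A) = card A"
  by (simp add: card_image)

lemma transpose_image_subset: "a \<in> S \<Longrightarrow> b \<in> S \<Longrightarrow> A \<subseteq> S \<Longrightarrow> transpose a b ` A \<subseteq> S"
  by (auto simp: transpose_def)

lemma transpose_image_commute:
  assumes "a \<noteq> c" "a \<noteq> d" "b \<noteq> c" "b \<noteq> d"
  shows "transpose a b ` transpose c d ` A = transpose c d ` transpose a b ` A"
  using assms by (auto simp: image_image transpose_def intro!: image_cong)

lemma bij_betw_transpose_image_Pow:
  "a \<in> S \<Longrightarrow> b \<in> S \<Longrightarrow> bij_betw (image (transpose a b)) (Pow S) (Pow S)"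
  by (rule bij_betw_byWitness[where f'="image (transpose a b)"]) (auto simp: transpose_def)

lemma transpose_image_Int_fixed: "a \<notin> Q \<Longrightarrow> b \<notin> Q \<Longrightarrow> transpose a b ` B \<inter> Q = B \<inter> Q"
  by (auto simp: in_transpose_image_iff transpose_def split: if_splits)

lemma transpose_image_Diff: "transpose a b ` (A - {x}) = transpose a b ` A - {transpose a b x}"
  by (simp add: image_set_diff inj_transpose)

lemma prod_mem_split:
  fixes g :: "'a \<Rightarrow> bool \<Rightarrow> 'c::comm_monoid_mult"
  assumes "finite S" "B \<subseteq> S"
  shows "(\<Prod>i\<in>S. g i (i \<in> B)) = (\<Prod>i\<in>B. g i True) * (\<Prod>i\<in>S - B. g i False)"
proof -
  have "(\<Prod>i\<in>S. g i (i \<in> B)) = (\<Prod>i\<in>S. if i \<in> B then g i True else g i False)"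
    by (rule prod.cong) auto
  also have "\<dots> = (\<Prod>i\<in>S \<inter> {i. i \<in> B}. g i True) * (\<Prod>i\<in>S \<inter> - {i. i \<in> B}. g i False)"
    by (rule prod.If_cases) (rule assms)
  also have "S \<inter> {i. i \<in> B} = B" using assms by auto
  also have "S \<inter> - {i. i \<in> B} = S - B" by auto
  finally show ?thesis .
qed

lemma sum_Pow_prod_mem:
  fixes g :: "'a \<Rightarrow> bool \<Rightarrow> 'c::comm_semiring_1"
  assumes "finite S"
  shows "(\<Sum>B\<in>Pow S. \<Prod>i\<in>S. g i (i \<in> B)) = (\<Prod>i\<in>S. g i True + g i False)"
  using prod_add[OF assms, of "\<lambda>i. g i True" "\<lambda>i. g i False"] assms
  by (simp add: prod_mem_split finite_subset)

lemma sum_Pow_remove_insert: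
  fixes g :: "'a set \<Rightarrow> 'c::comm_monoid_add"
  assumes "finite S" "l \<in> S"
  shows "(\<Sum>A\<in>Pow S. g A) = (\<Sum>A\<in>Pow (S - {l}). g A + g (insert l A))"
proof -
  have S: "S = insert l (S - {l})" using assms by auto
  have "(\<Sum>A\<in>Pow S. g A) = (\<Sum>A\<in>Pow (S - {l}) \<union> insert l ` Pow (S - {l}). g A)"
    by (subst S) (simp only: Pow_insert)
  also have "\<dots> = (\<Sum>A\<in>Pow (S - {l}). g A) + (\<Sum>A\<in>insert l ` Pow (S - {l}). g A)"
    by (rule sum.union_disjoint) (use assms in auto)
  also have "(\<Sum>A\<in>insert l ` Pow (S - {l}). g A) = (\<Sum>A\<in>Pow (S - {l}). g (insert l A))"
    by (rule sum.reindex_cong[where l="insert l"]) (auto simp: inj_on_def)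
  finally show ?thesis by (simp add: sum.distrib)
qed

lemma exchange_invariant_imp_constant:
  assumes "finite W"
    and exchange: "\<And>S a b. S \<subseteq> W \<Longrightarrow> card S = n \<Longrightarrow> a \<in> S \<Longrightarrow> b \<in> W - S \<Longrightarrow>
      \<phi> S = \<phi> (insert b (S - {a}))"
  shows "S \<subseteq> W \<Longrightarrow> S' \<subseteq> W \<Longrightarrow> card S = n \<Longrightarrow> card S' = n \<Longrightarrow> \<phi> S = \<phi> S'"
proof (induction "card (S - S')" arbitrary: S)
  case 0
  have "finite S" "finite S'" using 0 assms(1) by (auto intro: finite_subset)
  then have "S \<subseteq> S'" using 0 by auto
  then show ?case using card_subset_eq[OF \<open>finite S'\<close>] 0 by auto
next
  case (Suc d)
  have fin: "finite S" "finite S'" using Suc.prems assms(1) by (auto intro: finite_subset)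
  obtain a where a: "a \<in> S - S'" using Suc.hyps(2) by (metis card.empty ex_in_conv nat.distinct(1))
  have "card (S' - S) = card (S - S')"
    using fin Suc.prems(3,4) by (simp add: card_Diff_subset_Int Int_commute)
  then obtain b where b: "b \<in> S' - S" using Suc.hyps(2) by (metis card.empty ex_in_conv nat.distinct(1))
  define S1 where "S1 = insert b (S - {a})"
  have "S1 \<subseteq> W" using Suc.prems a b unfolding S1_def by auto
  moreover have "card S1 = n" using Suc.prems(3) a b fin card_gt_0_iff[of S] unfolding S1_def by (auto simp: card_insert_if)
  moreover have "S1 - S' = (S - S') - {a}" using a b unfolding S1_def by auto
  then have "d = card (S1 - S')" using Suc.hyps(2) a fin by simp
  ultimately have "\<phi> S1 = \<phi> S'" using Suc.hyps(1) Suc.prems(2,4) by blast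
  moreover have "\<phi> S = \<phi> S1" unfolding S1_def using exchange[OF Suc.prems(1,3)] a b Suc.prems(2) by auto
  ultimately show ?case by simp
qed

primrec antisymmetrize :: "('a \<times> 'a) list \<Rightarrow> ('a set \<Rightarrow> 'b::group_add) \<Rightarrow> 'a set \<Rightarrow> 'b" where
  "antisymmetrize [] F = F"
| "antisymmetrize (p # ps) F =
     (\<lambda>A. antisymmetrize ps F A - antisymmetrize ps F (transpose (fst p) (snd p) ` A))"

definition firsts :: "('a \<times> 'a) list \<Rightarrow> 'a set" where
  "firsts ps = fst ` set ps"

definition pair_points :: "('a \<times> 'a) list \<Rightarrow> 'a set" where
  "pair_points ps = fst ` set ps \<union> snd ` set ps"

lemma firsts_Nil [simp]: "firsts [] = {}"
  by (simp add: firsts_def)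

lemma pair_points_Nil [simp]: "pair_points [] = {}"
  by (simp add: pair_points_def)

lemma firsts_Cons [simp]: "firsts (p # ps) = insert (fst p) (firsts ps)"
  by (simp add: firsts_def)

lemma pair_points_Cons [simp]: "pair_points (p # ps) = insert (fst p) (insert (snd p) (pair_points ps))"
  by (auto simp: pair_points_def)

lemma pair_points_memI: "p \<in> set ps \<Longrightarrow> fst p \<in> pair_points ps \<and> snd p \<in> pair_points ps"
  by (auto simp: pair_points_def)

lemma firsts_subset_pair_points: "firsts ps \<subseteq> pair_points ps"
  by (auto simp: firsts_def pair_points_def)

section \<open>A transform on functions of supports\<close>

locale support_scheme =
  fixes D q :: nat
  assumes q_ge_2: "2 \<le> q"
begin

abbreviation coords :: "nat set" where "coords \<equiv> {0..<D}"
abbreviation qc :: complex where "qc \<equiv> of_nat q"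

lemma qc_nonzero: "qc \<noteq> 0" using q_ge_2 by simp

lemma card_le_D: "A \<subseteq> coords \<Longrightarrow> card A \<le> D"
  by (metis card_atLeastLessThan card_mono finite_atLeastLessThan diff_zero)

text \<open>For words u of support A, \<open>char_kernel A B\<close> is the sum, over the words v of support B, of
  the characters \<open>\<psi>(u \<bullet> v)\<close> of the group \<open>\<Q>\<^sup>D\<close>; coordinatewise, summing \<open>\<psi>(u\<^sub>i v\<^sub>i)\<close> over the
  nonzero \<open>v\<^sub>i\<close> gives -1 or q - 1 according as \<open>u\<^sub>i \<noteq> 0\<close> or not.\<close>
definition char1 :: "bool \<Rightarrow> bool \<Rightarrow> complex" where
  "char1 x y = (if y then (if x then -1 else qc - 1) else 1)"

definition char_kernel :: "nat set \<Rightarrow> nat set \<Rightarrow> complex" where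
  "char_kernel A B = (\<Prod>i\<in>coords. char1 (i \<in> A) (i \<in> B))"

definition transform :: "(nat set \<Rightarrow> complex) \<Rightarrow> nat set \<Rightarrow> complex" where
  "transform F B = (\<Sum>A\<in>Pow coords. F A * char_kernel A B)"

text \<open>If F counts the words of each support in Y, then \<open>adjacency F\<close> counts those of \<open>A\<^sub>1 \<chi>\<^sub>Y\<close>:
  a word of support A is adjacent to q - 1 words of support \<open>A - {l}\<close> and q - 2 words of
  support A for each \<open>l \<in> A\<close>, and to one word of support \<open>insert l A\<close> for each \<open>l \<notin> A\<close>.\<close>
definition adjacency :: "(nat set \<Rightarrow> complex) \<Rightarrow> nat set \<Rightarrow> complex" where
  "adjacency F A = (\<Sum>l\<in>coords.
     if l \<in> A then (qc - 1) * F (A - {l}) + (qc - 2) * F A else F (insert l A))"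

text \<open>The eigenvalue of \<open>A\<^sub>1\<close> on \<open>E\<^sub>j V\<close>.\<close>
definition theta :: "nat \<Rightarrow> complex" where
  "theta j = (qc - 1) * of_nat D - qc * of_nat j"

lemma transform_cong: "(\<And>A. A \<subseteq> coords \<Longrightarrow> F A = G A) \<Longrightarrow> transform F = transform G"
  unfolding transform_def by (intro ext sum.cong) auto

lemma transform_diff: "transform (\<lambda>A. F A - G A) B = transform F B - transform G B"
  unfolding transform_def by (simp add: algebra_simps sum_subtractf)

lemma transform_scale: "transform (\<lambda>A. c * F A) B = c * transform F B"
  unfolding transform_def by (simp add: algebra_simps sum_distrib_left)

lemma char1_orthogonal:
  "char1 a True * char1 True c + char1 a False * char1 False c = (if a = c then qc else 0)"
  by (cases a; cases c) (auto simp: char1_def algebra_simps)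

lemma char_kernel_orthogonal:
  assumes "A \<subseteq> coords" "C \<subseteq> coords"
  shows "(\<Sum>B\<in>Pow coords. char_kernel A B * char_kernel B C) = (if A = C then qc ^ D else 0)"
proof -
  have "(\<Sum>B\<in>Pow coords. char_kernel A B * char_kernel B C)
      = (\<Sum>B\<in>Pow coords. \<Prod>i\<in>coords. char1 (i \<in> A) (i \<in> B) * char1 (i \<in> B) (i \<in> C))"
    unfolding char_kernel_def by (simp add: prod.distrib)
  also have "\<dots> = (\<Prod>i\<in>coords. char1 (i \<in> A) True * char1 True (i \<in> C)
                                + char1 (i \<in> A) False * char1 False (i \<in> C))"
    by (rule sum_Pow_prod_mem[of coords "\<lambda>i b. char1 (i \<in> A) b * char1 b (i \<in> C)", simplified])
  also have "\<dots> = (\<Prod>i\<in>coords. if (i \<in> A) = (i \<in> C) then qc else 0)"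
    by (simp add: char1_orthogonal)
  also have "\<dots> = (if A = C then qc ^ D else 0)"
  proof (cases "A = C")
    case False
    then obtain i where "i \<in> coords" "(i \<in> A) \<noteq> (i \<in> C)" using assms by blast
    then have "(\<Prod>i\<in>coords. if (i \<in> A) = (i \<in> C) then qc else 0) = 0"
      by (intro prod_zero) auto
    then show ?thesis using False by simp
  qed simp
  finally show ?thesis .
qed

lemma transform_transform:
  assumes "C \<subseteq> coords"
  shows "transform (transform F) C = qc ^ D * F C"
proof -
  have "transform (transform F) C
      = (\<Sum>A\<in>Pow coords. F A * (\<Sum>B\<in>Pow coords. char_kernel A B * char_kernel B C))"
    unfolding transform_def sum_distrib_right sum_distrib_left by (subst sum.swap) (simp add: mult.assoc)
  also have "\<dots> = qc ^ D * F C"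
    using assms by (simp add: char_kernel_orthogonal if_distrib sum.delta mult.commute cong: if_cong)
  finally show ?thesis .
qed

lemma transform_eq_zero_imp:
  assumes "\<And>B. B \<subseteq> coords \<Longrightarrow> transform F B = 0" "C \<subseteq> coords"
  shows "F C = 0"
proof -
  have "transform (transform F) C = transform (\<lambda>_. 0) C" by (rule arg_cong[OF transform_cong]) (use assms in auto)
  then show ?thesis using transform_transform[OF assms(2)] qc_nonzero by (simp add: transform_def)
qed

lemma char_kernel_remove:
  assumes "l \<in> coords" "l \<notin> A"
  shows "char_kernel A B = char1 False (l \<in> B) * (\<Prod>i\<in>coords - {l}. char1 (i \<in> A) (i \<in> B))"
    and "char_kernel (insert l A) B = char1 True (l \<in> B) * (\<Prod>i\<in>coords - {l}. char1 (i \<in> A) (i \<in> B))"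
proof -
  show "char_kernel A B = char1 False (l \<in> B) * (\<Prod>i\<in>coords - {l}. char1 (i \<in> A) (i \<in> B))"
    unfolding char_kernel_def using assms by (subst prod.remove[of _ l]) auto
  have "char_kernel (insert l A) B
      = char1 True (l \<in> B) * (\<Prod>i\<in>coords - {l}. char1 (i \<in> insert l A) (i \<in> B))"
    unfolding char_kernel_def using assms(1) by (subst prod.remove[of _ l]) auto
  also have "(\<Prod>i\<in>coords - {l}. char1 (i \<in> insert l A) (i \<in> B))
           = (\<Prod>i\<in>coords - {l}. char1 (i \<in> A) (i \<in> B))"
    by (intro prod.cong) auto
  finally show "char_kernel (insert l A) B
      = char1 True (l \<in> B) * (\<Prod>i\<in>coords - {l}. char1 (i \<in> A) (i \<in> B))" .
qed

lemma transform_adjacency_term: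
  assumes l: "l \<in> coords"
  shows "(\<Sum>A\<in>Pow coords. (if l \<in> A then (qc - 1) * F (A - {l}) + (qc - 2) * F A else F (insert l A))
            * char_kernel A B)
       = (if l \<in> B then -1 else qc - 1) * transform F B"
proof -
  define R where "R A = (\<Prod>i\<in>coords - {l}. char1 (i \<in> A) (i \<in> B))" for A
  have lhs: "(\<Sum>A\<in>Pow coords. (if l \<in> A then (qc - 1) * F (A - {l}) + (qc - 2) * F A else F (insert l A))
                 * char_kernel A B)
      = (\<Sum>A\<in>Pow (coords - {l}). (F (insert l A) * char1 False (l \<in> B)
           + ((qc - 1) * F A + (qc - 2) * F (insert l A)) * char1 True (l \<in> B)) * R A)"
    unfolding sum_Pow_remove_insert[OF finite_atLeastLessThan l]
  proof (intro sum.cong refl)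
    fix A assume "A \<in> Pow (coords - {l})"
    then have "l \<notin> A" "insert l A - {l} = A" by auto
    then show "(if l \<in> A then (qc - 1) * F (A - {l}) + (qc - 2) * F A else F (insert l A)) * char_kernel A B
        + (if l \<in> insert l A then (qc - 1) * F (insert l A - {l}) + (qc - 2) * F (insert l A)
           else F (insert l (insert l A))) * char_kernel (insert l A) B
      = (F (insert l A) * char1 False (l \<in> B)
           + ((qc - 1) * F A + (qc - 2) * F (insert l A)) * char1 True (l \<in> B)) * R A"
      using char_kernel_remove[OF l, of A B] by (simp add: R_def algebra_simps)
  qed
  have rhs: "transform F B = (\<Sum>A\<in>Pow (coords - {l}).
      (F A * char1 False (l \<in> B) + F (insert l A) * char1 True (l \<in> B)) * R A)"
    unfolding transform_def sum_Pow_remove_insert[OF finite_atLeastLessThan l]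
  proof (intro sum.cong refl)
    fix A assume "A \<in> Pow (coords - {l})"
    then have "l \<notin> A" by auto
    then show "F A * char_kernel A B + F (insert l A) * char_kernel (insert l A) B
      = (F A * char1 False (l \<in> B) + F (insert l A) * char1 True (l \<in> B)) * R A"
      using char_kernel_remove[OF l, of A B] by (simp add: R_def algebra_simps)
  qed
  show ?thesis
    unfolding lhs rhs sum_distrib_left
    by (intro sum.cong refl) (auto simp: char1_def algebra_simps)
qed

lemma sum_char1_eq_theta:
  assumes "B \<subseteq> coords"
  shows "(\<Sum>l\<in>coords. if l \<in> B then -1 else qc - 1) = theta (card B)"
proof -
  have "(\<Sum>l\<in>coords. if l \<in> B then -1 else qc - 1)
      = (\<Sum>l\<in>coords \<inter> {l. l \<in> B}. -1) + (\<Sum>l\<in>coords \<inter> - {l. l \<in> B}. qc - 1)"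
    by (rule sum.If_cases) simp
  also have "coords \<inter> {l. l \<in> B} = B" using assms by auto
  also have "coords \<inter> - {l. l \<in> B} = coords - B" by auto
  also have "(\<Sum>l\<in>B. -1) + (\<Sum>l\<in>coords - B. qc - 1) = - of_nat (card B) + of_nat (D - card B) * (qc - 1)"
    using assms by (simp add: card_Diff_subset finite_subset)
  finally show ?thesis
    using card_le_D[OF assms] by (simp add: theta_def of_nat_diff algebra_simps)
qed

lemma transform_adjacency:
  assumes "B \<subseteq> coords"
  shows "transform (adjacency F) B = theta (card B) * transform F B"
proof -
  have "transform (adjacency F) B = (\<Sum>l\<in>coords. \<Sum>A\<in>Pow coords.
      (if l \<in> A then (qc - 1) * F (A - {l}) + (qc - 2) * F A else F (insert l A)) * char_kernel A B)"
    unfolding transform_def adjacency_def sum_distrib_right by (rule sum.swap)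
  also have "\<dots> = (\<Sum>l\<in>coords. (if l \<in> B then -1 else qc - 1) * transform F B)"
    by (intro sum.cong refl transform_adjacency_term) auto
  also have "\<dots> = theta (card B) * transform F B"
    by (simp add: sum_distrib_right[symmetric] sum_char1_eq_theta[OF assms])
  finally show ?thesis .
qed

lemma adjacency_cong:
  assumes "\<And>A. A \<subseteq> coords \<Longrightarrow> F A = G A" "A \<subseteq> coords"
  shows "adjacency F A = adjacency G A"
  unfolding adjacency_def
proof (intro sum.cong refl)
  fix l assume "l \<in> coords"
  then have "A - {l} \<subseteq> coords" "insert l A \<subseteq> coords" using assms(2) by auto
  then show "(if l \<in> A then (qc - 1) * F (A - {l}) + (qc - 2) * F A else F (insert l A)) =
    (if l \<in> A then (qc - 1) * G (A - {l}) + (qc - 2) * G A else G (insert l A))"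
    using assms by simp
qed

lemma adjacency_uminus: "adjacency (\<lambda>A. - F A) B = - adjacency F B"
  unfolding adjacency_def sum_negf[symmetric] by (intro sum.cong refl) (simp add: algebra_simps)

lemma char_kernel_transpose:
  assumes "a \<in> coords" "b \<in> coords"
  shows "char_kernel (transpose a b ` A) B = char_kernel A (transpose a b ` B)"
proof -
  have "char_kernel (transpose a b ` A) B = (\<Prod>i\<in>coords. char1 (transpose a b i \<in> A) (i \<in> B))"
    unfolding char_kernel_def by (simp add: in_transpose_image_iff)
  also have "\<dots> = (\<Prod>i\<in>coords. char1 (transpose a b (transpose a b i) \<in> A) (transpose a b i \<in> B))"
    by (rule prod.reindex_bij_betw[symmetric]) (use assms in simp)
  also have "\<dots> = char_kernel A (transpose a b ` B)"
    unfolding char_kernel_def by (simp add: in_transpose_image_iff)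
  finally show ?thesis .
qed

lemma transform_transpose:
  assumes "a \<in> coords" "b \<in> coords"
  shows "transform (\<lambda>A. F (transpose a b ` A)) B = transform F (transpose a b ` B)"
proof -
  have "transform (\<lambda>A. F (transpose a b ` A)) B
      = (\<Sum>A\<in>Pow coords. F (transpose a b ` A) * char_kernel (transpose a b ` transpose a b ` A) B)"
    unfolding transform_def by simp
  also have "\<dots> = (\<Sum>A\<in>Pow coords. F A * char_kernel (transpose a b ` A) B)"
    by (rule sum.reindex_bij_betw[OF bij_betw_transpose_image_Pow[OF assms]])
  also have "\<dots> = transform F (transpose a b ` B)"
    unfolding transform_def using char_kernel_transpose[OF assms] by simp
  finally show ?thesis .
qed

lemma adjacency_transpose:
  assumes "a \<in> coords" "b \<in> coords"
  shows "adjacency (\<lambda>A. F (transpose a b ` A)) A = adjacency F (transpose a b ` A)"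
proof -
  let ?T = "transpose a b"
  have "adjacency F (?T ` A) = (\<Sum>l\<in>coords. if ?T l \<in> ?T ` A
      then (qc - 1) * F (?T ` A - {?T l}) + (qc - 2) * F (?T ` A) else F (insert (?T l) (?T ` A)))"
    unfolding adjacency_def by (rule sum.reindex_bij_betw[symmetric]) (use assms in simp)
  also have "\<dots> = adjacency (\<lambda>A. F (?T ` A)) A"
    unfolding adjacency_def by (intro sum.cong refl) (simp add: in_transpose_image_iff transpose_image_Diff)
  finally show ?thesis by simp
qed

section \<open>Antisymmetrization under disjoint transpositions\<close>

definition disjoint_pairs :: "(nat \<times> nat) list \<Rightarrow> bool" where
  "disjoint_pairs ps \<longleftrightarrow> distinct (map fst ps @ map snd ps) \<and> pair_points ps \<subseteq> coords"

definition free_coords :: "(nat \<times> nat) list \<Rightarrow> nat set" where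
  "free_coords ps = coords - pair_points ps"

definition antisymmetric :: "(nat \<times> nat) list \<Rightarrow> (nat set \<Rightarrow> complex) \<Rightarrow> bool" where
  "antisymmetric ps H \<longleftrightarrow>
     (\<forall>p\<in>set ps. \<forall>A\<subseteq>coords. H (transpose (fst p) (snd p) ` A) = - H A)"

lemma disjoint_pairs_Cons:
  "disjoint_pairs (p # ps) \<longleftrightarrow> disjoint_pairs ps \<and> fst p \<noteq> snd p
     \<and> fst p \<notin> pair_points ps \<and> snd p \<notin> pair_points ps \<and> fst p \<in> coords \<and> snd p \<in> coords"
  unfolding disjoint_pairs_def pair_points_def by auto

lemma disjoint_pairs_Nil [simp]: "disjoint_pairs []"
  by (simp add: disjoint_pairs_def)

lemma disjoint_pairsD:
  assumes "disjoint_pairs ps"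
  shows "distinct (map fst ps)" "distinct (map snd ps)" "firsts ps \<inter> snd ` set ps = {}"
    and "pair_points ps \<subseteq> coords"
  using assms unfolding disjoint_pairs_def firsts_def by auto

lemma disjoint_pairs_eqD:
  assumes "disjoint_pairs ps" "p \<in> set ps" "p' \<in> set ps"
  shows "fst p \<noteq> snd p'" "fst p = fst p' \<Longrightarrow> p = p'" "snd p = snd p' \<Longrightarrow> p = p'"
proof -
  show "fst p \<noteq> snd p'" using disjoint_pairsD(3)[OF assms(1)] assms(2,3) by (auto simp: firsts_def)
  show "fst p = fst p' \<Longrightarrow> p = p'"
    using disjoint_pairsD(1)[OF assms(1)] assms(2,3) by (meson distinct_map inj_onD)
  show "snd p = snd p' \<Longrightarrow> p = p'"
    using disjoint_pairsD(2)[OF assms(1)] assms(2,3) by (meson distinct_map inj_onD)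
qed

lemma disjoint_pairs_coords: "disjoint_pairs ps \<Longrightarrow> p \<in> set ps \<Longrightarrow> fst p \<in> coords \<and> snd p \<in> coords"
  unfolding disjoint_pairs_def pair_points_def by auto

lemma card_firsts: "disjoint_pairs ps \<Longrightarrow> card (firsts ps) = length ps"
  unfolding firsts_def using disjoint_pairsD(1) by (metis distinct_card length_map set_map)

lemma antisymmetric_antisymmetrize:
  "disjoint_pairs ps \<Longrightarrow> antisymmetric ps (antisymmetrize ps F)"
proof (induction ps)
  case Nil then show ?case by (simp add: antisymmetric_def)
next
  case (Cons p ps)
  obtain a b where p: "p = (a, b)" by force
  have ps: "disjoint_pairs ps" and ab: "a \<notin> pair_points ps" "b \<notin> pair_points ps" "a \<in> coords" "b \<in> coords"
    using Cons.prems by (auto simp: disjoint_pairs_Cons p)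
  define G where "G = antisymmetrize ps F"
  have G: "G (transpose c d ` A) = - G A" if "(c, d) \<in> set ps" "A \<subseteq> coords" for c d A
    using Cons.IH[OF ps] that unfolding antisymmetric_def G_def by fastforce
  show ?case unfolding antisymmetric_def
  proof (intro ballI allI impI)
    fix p' A assume p': "p' \<in> set (p # ps)" and A: "A \<subseteq> coords"
    show "antisymmetrize (p # ps) F (transpose (fst p') (snd p') ` A) = - antisymmetrize (p # ps) F A"
    proof (cases "p' = p")
      case False
      obtain c d where p'': "p' = (c, d)" by force
      with False p' have cd: "(c, d) \<in> set ps" by simp
      then have "c \<in> pair_points ps" "d \<in> pair_points ps" using pair_points_memI by fastforce+
      then have "a \<noteq> c" "a \<noteq> d" "b \<noteq> c" "b \<noteq> d" using ab by auto
      then have "transpose a b ` transpose c d ` A = transpose c d ` transpose a b ` A"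
        by (rule transpose_image_commute)
      moreover have "G (transpose c d ` A) = - G A" using G[OF cd A] .
      moreover have "G (transpose c d ` transpose a b ` A) = - G (transpose a b ` A)"
        using G[OF cd transpose_image_subset[OF ab(3,4) A]] .
      ultimately show ?thesis unfolding G_def by (simp add: p p'')
    qed (simp add: p)
  qed
qed

lemma antisymmetric_eq_zero:
  assumes "antisymmetric ps H" "p \<in> set ps" "A \<subseteq> coords" "fst p \<in> A \<longleftrightarrow> snd p \<in> A"
  shows "H A = 0"
proof -
  have "H (transpose (fst p) (snd p) ` A) = - H A" using assms(1-3) unfolding antisymmetric_def by blast
  then show ?thesis using assms(4) by simp
qed

lemma antisymmetrize_level_zero:
  assumes "disjoint_pairs ps" "\<And>A. A \<subseteq> coords \<Longrightarrow> card A = i \<Longrightarrow> F A = 0"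
  shows "A \<subseteq> coords \<Longrightarrow> card A = i \<Longrightarrow> antisymmetrize ps F A = 0"
  using assms(1)
proof (induction ps arbitrary: A)
  case (Cons p ps)
  then have ps: "disjoint_pairs ps" and "transpose (fst p) (snd p) ` A \<subseteq> coords"
    using transpose_image_subset[of "fst p" coords "snd p" A] by (auto simp: disjoint_pairs_Cons)
  then have "antisymmetrize ps F (transpose (fst p) (snd p) ` A) = 0"
    using Cons.IH Cons.prems(2) by simp
  then show ?case using Cons.IH[OF Cons.prems(1,2) ps] by simp
qed (use assms(2) in simp)

lemma transform_antisymmetrize:
  "disjoint_pairs ps \<Longrightarrow> B \<subseteq> coords \<Longrightarrow> transform (antisymmetrize ps F) B = antisymmetrize ps (transform F) B"
proof (induction ps arbitrary: B)
  case (Cons p ps)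
  let ?T = "transpose (fst p) (snd p)"
  have ps: "disjoint_pairs ps" and ab: "fst p \<in> coords" "snd p \<in> coords"
    using Cons.prems by (auto simp: disjoint_pairs_Cons)
  have "transform (antisymmetrize (p # ps) F) B
      = transform (antisymmetrize ps F) B - transform (\<lambda>A. antisymmetrize ps F (?T ` A)) B"
    by (simp add: transform_diff)
  also have "\<dots> = transform (antisymmetrize ps F) B - transform (antisymmetrize ps F) (?T ` B)"
    by (simp only: transform_transpose[OF ab])
  also have "\<dots> = antisymmetrize (p # ps) (transform F) B"
    using Cons.IH[OF ps] Cons.prems(2) transpose_image_subset[OF ab Cons.prems(2)] by simp
  finally show ?case .
qed simp

lemma antisymmetric_adjacency:
  assumes "disjoint_pairs ps" "antisymmetric ps H"
  shows "antisymmetric ps (\<lambda>A. adjacency H A - c * H A)"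
  unfolding antisymmetric_def
proof (intro ballI allI impI)
  fix p A assume p: "p \<in> set ps" and A: "A \<subseteq> coords"
  let ?T = "transpose (fst p) (snd p)"
  have H: "H (?T ` B) = - H B" if "B \<subseteq> coords" for B
    using assms(2) p that unfolding antisymmetric_def by blast
  have "adjacency H (?T ` A) = adjacency (\<lambda>B. H (?T ` B)) A"
    using adjacency_transpose disjoint_pairs_coords[OF assms(1) p] by simp
  also have "\<dots> = - adjacency H A"
    using adjacency_cong[OF H A] adjacency_uminus by simp
  finally show "adjacency H (?T ` A) - c * H (?T ` A) = - (adjacency H A - c * H A)"
    using H[OF A] by simp
qed

text \<open>Such a set A contains exactly one point of each pair.\<close>
lemma antisymmetric_support_card:
  assumes "disjoint_pairs ps" "antisymmetric ps H" "A \<subseteq> coords" "H A \<noteq> 0"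
  shows "length ps \<le> card A \<and> card A \<le> D - length ps"
proof -
  have split: "(fst p \<in> A) \<noteq> (snd p \<in> A)" if "p \<in> set ps" for p
    using antisymmetric_eq_zero[OF assms(2) that assms(3)] assms(4) by blast
  define f where "f p = (if fst p \<in> A then fst p else snd p)" for p :: "nat \<times> nat"
  define g where "g p = (if fst p \<in> A then snd p else fst p)" for p :: "nat \<times> nat"
  have "inj_on f (set ps)" "inj_on g (set ps)"
    using disjoint_pairs_eqD[OF assms(1)] unfolding f_def g_def inj_on_def by (smt (verit))+
  moreover have "card (set ps) = length ps"
    using disjoint_pairsD(1)[OF assms(1)] by (metis distinct_card distinct_map)
  ultimately have "card (f ` set ps) = length ps" "card (g ` set ps) = length ps"
    by (simp_all add: card_image)
  moreover have "f ` set ps \<subseteq> A" "g ` set ps \<subseteq> coords - A"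
    using split disjoint_pairs_coords[OF assms(1)] unfolding f_def g_def by auto
  then have "card (f ` set ps) \<le> card A" "card (g ` set ps) \<le> card (coords - A)"
    using assms(3) by (auto intro!: card_mono intro: finite_subset)
  moreover have "card (coords - A) = D - card A"
    using assms(3) by (simp add: card_Diff_subset finite_subset)
  ultimately show ?thesis
    using card_le_D[OF assms(3)] by linarith
qed

section \<open>Level sums and the adjacency recurrence\<close>

definition adapted :: "(nat \<times> nat) list \<Rightarrow> nat set set" where
  "adapted ps = {A. A \<subseteq> coords \<and> A \<inter> pair_points ps = firsts ps}"

definition adapted_level :: "(nat \<times> nat) list \<Rightarrow> nat \<Rightarrow> nat set set" where
  "adapted_level ps k = {A \<in> adapted ps. card A = k}"

definition level_sum :: "(nat \<times> nat) list \<Rightarrow> (nat set \<Rightarrow> complex) \<Rightarrow> nat \<Rightarrow> complex" where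
  "level_sum ps H k = (\<Sum>A\<in>adapted_level ps k. H A)"

lemma finite_adapted: "finite (adapted ps)"
  by (rule finite_subset[of _ "Pow coords"]) (auto simp: adapted_def)

lemma finite_adapted_level: "finite (adapted_level ps k)"
  using finite_adapted by (simp add: adapted_level_def)

lemma adapted_level_card:
  assumes "disjoint_pairs ps" "A \<in> adapted_level ps k"
  shows "card (A \<inter> free_coords ps) = k - length ps" "length ps \<le> k"
    and "card (free_coords ps - A) = card (free_coords ps) - (k - length ps)"
proof -
  have A: "A \<subseteq> coords" "card A = k" "A \<inter> pair_points ps = firsts ps"
    using assms(2) by (auto simp: adapted_level_def adapted_def)
  then have "A = firsts ps \<union> (A \<inter> free_coords ps)" "firsts ps \<inter> (A \<inter> free_coords ps) = {}"
    using firsts_subset_pair_points[of ps] by (auto simp: free_coords_def)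
  moreover have "finite (firsts ps)" "finite (A \<inter> free_coords ps)"
    using A(1) by (auto simp: firsts_def intro: finite_subset)
  ultimately have "k = length ps + card (A \<inter> free_coords ps)"
    using A(2) card_Un_disjoint card_firsts[OF assms(1)] by metis
  then show "card (A \<inter> free_coords ps) = k - length ps" "length ps \<le> k" by auto
  moreover have "card (free_coords ps - A) = card (free_coords ps) - card (free_coords ps \<inter> A)"
    by (rule card_Diff_subset_Int) (simp add: free_coords_def)
  ultimately show "card (free_coords ps - A) = card (free_coords ps) - (k - length ps)"
    by (simp add: Int_commute)
qed

lemma adapted_level_empty: "disjoint_pairs ps \<Longrightarrow> k < length ps \<Longrightarrow> adapted_level ps k = {}"
  using adapted_level_card(2) by fastforce

lemma level_sum_level_zero:
  "(\<And>A. A \<subseteq> coords \<Longrightarrow> card A = k \<Longrightarrow> H A = 0) \<Longrightarrow> level_sum ps H k = 0"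
  unfolding level_sum_def adapted_level_def adapted_def by (intro sum.neutral) auto

lemma level_sum_diff: "level_sum ps (\<lambda>A. G A - c * H A) k = level_sum ps G k - c * level_sum ps H k"
  unfolding level_sum_def by (simp add: sum_subtractf sum_distrib_left)

lemma sum_adapted_level_insert:
  "(\<Sum>A\<in>adapted_level ps k. \<Sum>l\<in>free_coords ps - A. g A (insert l A))
   = (\<Sum>B\<in>adapted_level ps (Suc k). \<Sum>l\<in>B \<inter> free_coords ps. g (B - {l}) B)"
proof -
  have fin: "finite A" if "A \<in> adapted_level ps j" for A j
    using that by (auto simp: adapted_level_def adapted_def intro: finite_subset)
  have "(\<Sum>A\<in>adapted_level ps k. \<Sum>l\<in>free_coords ps - A. g A (insert l A))
      = (\<Sum>(A, l)\<in>(SIGMA A:adapted_level ps k. free_coords ps - A). g A (insert l A))"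
    by (rule sum.Sigma) (auto simp: finite_adapted_level free_coords_def)
  also have "\<dots> = (\<Sum>(B, l)\<in>(SIGMA B:adapted_level ps (Suc k). B \<inter> free_coords ps). g (B - {l}) B)"
  proof (rule sum.reindex_bij_witness[where i="\<lambda>(B, l). (B - {l}, l)" and j="\<lambda>(A, l). (insert l A, l)"])
    fix a assume "a \<in> (SIGMA A:adapted_level ps k. free_coords ps - A)"
    then obtain A l where a: "a = (A, l)" "A \<in> adapted_level ps k" "l \<in> free_coords ps" "l \<notin> A" by auto
    then show "(case case a of (A, l) \<Rightarrow> (insert l A, l) of (B, l) \<Rightarrow> (B - {l}, l)) = a"
      and "(case case a of (A, l) \<Rightarrow> (insert l A, l) of (B, l) \<Rightarrow> g (B - {l}) B)
           = (case a of (A, l) \<Rightarrow> g A (insert l A))"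
      by auto
    show "(case a of (A, l) \<Rightarrow> (insert l A, l)) \<in> (SIGMA B:adapted_level ps (Suc k). B \<inter> free_coords ps)"
      using a fin[OF a(2)] by (auto simp: adapted_level_def adapted_def free_coords_def)
  next
    fix b assume "b \<in> (SIGMA B:adapted_level ps (Suc k). B \<inter> free_coords ps)"
    then obtain B l where b: "b = (B, l)" "B \<in> adapted_level ps (Suc k)" "l \<in> free_coords ps" "l \<in> B" by auto
    then show "(case case b of (B, l) \<Rightarrow> (B - {l}, l) of (A, l) \<Rightarrow> (insert l A, l)) = b" by auto
    show "(case b of (B, l) \<Rightarrow> (B - {l}, l)) \<in> (SIGMA A:adapted_level ps k. free_coords ps - A)"
      using b fin[OF b(2)] by (auto simp: adapted_level_def adapted_def free_coords_def)
  qed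
  also have "\<dots> = (\<Sum>B\<in>adapted_level ps (Suc k). \<Sum>l\<in>B \<inter> free_coords ps. g (B - {l}) B)"
    by (rule sum.Sigma[symmetric]) (auto simp: finite_adapted_level free_coords_def)
  finally show ?thesis .
qed

lemma antisymmetric_adapted_zero:
  assumes ps: "disjoint_pairs ps" and H: "antisymmetric ps H" and A: "A \<in> adapted ps"
  shows "l \<in> A - free_coords ps \<Longrightarrow> H (A - {l}) = 0"
    and "l \<in> coords - A - free_coords ps \<Longrightarrow> H (insert l A) = 0"
proof -
  have AU: "A \<subseteq> coords" and AP: "A \<inter> pair_points ps = firsts ps"
    using A by (auto simp: adapted_def)
  assume "l \<in> A - free_coords ps"
  then have "l \<in> firsts ps" using AP AU by (auto simp: free_coords_def)
  then obtain p where p: "p \<in> set ps" "fst p = l" by (auto simp: firsts_def)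
  have "snd p \<notin> firsts ps" using disjoint_pairsD(3)[OF ps] p(1) by auto
  then have "snd p \<notin> A" using AP pair_points_memI[OF p(1)] by auto
  then show "H (A - {l}) = 0" using antisymmetric_eq_zero[OF H p(1), of "A - {l}"] AU p(2) by auto
next
  have AU: "A \<subseteq> coords" and AP: "A \<inter> pair_points ps = firsts ps"
    using A by (auto simp: adapted_def)
  assume l: "l \<in> coords - A - free_coords ps"
  then have "l \<in> pair_points ps" "l \<notin> firsts ps" using AP by (auto simp: free_coords_def)
  then obtain p where p: "p \<in> set ps" "snd p = l" by (auto simp: pair_points_def firsts_def)
  have "fst p \<in> A" using AP p(1) by (auto simp: firsts_def)
  moreover have "insert l A \<subseteq> coords" using AU l by auto
  ultimately show "H (insert l A) = 0"
    using antisymmetric_eq_zero[OF H p(1), of "insert l A"] p(2) by auto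
qed

lemma adjacency_adapted:
  assumes ps: "disjoint_pairs ps" and H: "antisymmetric ps H" and A: "A \<in> adapted_level ps k"
  shows "adjacency H A = (qc - 2) * of_nat k * H A + (qc - 1) * (\<Sum>l\<in>A \<inter> free_coords ps. H (A - {l}))
     + (\<Sum>l\<in>free_coords ps - A. H (insert l A))"
proof -
  have AU: "A \<subseteq> coords" and cA: "card A = k" and A': "A \<in> adapted ps"
    using A by (auto simp: adapted_level_def adapted_def)
  have "adjacency H A = (\<Sum>l\<in>coords \<inter> {l. l \<in> A}. (qc - 1) * H (A - {l}) + (qc - 2) * H A)
      + (\<Sum>l\<in>coords \<inter> - {l. l \<in> A}. H (insert l A))"
    unfolding adjacency_def by (rule sum.If_cases) simp
  also have "coords \<inter> {l. l \<in> A} = A" using AU by auto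
  also have "coords \<inter> - {l. l \<in> A} = coords - A" by auto
  also have "(\<Sum>l\<in>A. (qc - 1) * H (A - {l}) + (qc - 2) * H A)
      = (qc - 1) * (\<Sum>l\<in>A. H (A - {l})) + (qc - 2) * of_nat k * H A"
    using cA by (simp add: sum.distrib sum_distrib_left)
  also have "(\<Sum>l\<in>A. H (A - {l})) = (\<Sum>l\<in>A \<inter> free_coords ps. H (A - {l}))"
    using antisymmetric_adapted_zero(1)[OF ps H A'] AU
    by (intro sum.mono_neutral_right) (auto intro: finite_subset)
  also have "(\<Sum>l\<in>coords - A. H (insert l A)) = (\<Sum>l\<in>free_coords ps - A. H (insert l A))"
    using antisymmetric_adapted_zero(2)[OF ps H A']
    by (intro sum.mono_neutral_right) (auto simp: free_coords_def)
  finally show ?thesis by (simp add: algebra_simps)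
qed

lemma level_sum_adjacency:
  assumes ps: "disjoint_pairs ps" and H: "antisymmetric ps H" and k: "1 \<le> k"
  shows "level_sum ps (adjacency H) k = (qc - 2) * of_nat k * level_sum ps H k
     + (qc - 1) * of_nat (card (free_coords ps) - (k - 1 - length ps)) * level_sum ps H (k - 1)
     + of_nat (Suc k - length ps) * level_sum ps H (Suc k)"
proof -
  have "level_sum ps (adjacency H) k = (qc - 2) * of_nat k * level_sum ps H k
      + (qc - 1) * (\<Sum>A\<in>adapted_level ps k. \<Sum>l\<in>A \<inter> free_coords ps. H (A - {l}))
      + (\<Sum>A\<in>adapted_level ps k. \<Sum>l\<in>free_coords ps - A. H (insert l A))"
    unfolding level_sum_def
    by (simp add: adjacency_adapted[OF ps H] sum.distrib sum_distrib_left)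
  also have "(\<Sum>A\<in>adapted_level ps k. \<Sum>l\<in>A \<inter> free_coords ps. H (A - {l}))
      = (\<Sum>A\<in>adapted_level ps (k - 1). of_nat (card (free_coords ps - A)) * H A)"
    using sum_adapted_level_insert[where k="k - 1" and g="\<lambda>A B. H A"] k by simp
  also have "\<dots> = of_nat (card (free_coords ps) - (k - 1 - length ps)) * level_sum ps H (k - 1)"
    unfolding level_sum_def sum_distrib_left by (intro sum.cong) (simp_all add: adapted_level_card[OF ps])
  also have "(\<Sum>A\<in>adapted_level ps k. \<Sum>l\<in>free_coords ps - A. H (insert l A))
      = (\<Sum>A\<in>adapted_level ps (Suc k). of_nat (card (A \<inter> free_coords ps)) * H A)"
    using sum_adapted_level_insert[where k=k and g="\<lambda>A B. H B"] by simp
  also have "\<dots> = of_nat (Suc k - length ps) * level_sum ps H (Suc k)"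
    unfolding level_sum_def sum_distrib_left by (intro sum.cong) (simp_all add: adapted_level_card[OF ps])
  finally show ?thesis by (simp add: mult.assoc)
qed

primrec adjacency_poly :: "complex list \<Rightarrow> (nat set \<Rightarrow> complex) \<Rightarrow> nat set \<Rightarrow> complex" where
  "adjacency_poly [] H = H"
| "adjacency_poly (c # cs) H = adjacency_poly cs (\<lambda>A. adjacency H A - c * H A)"

lemma transform_adjacency_poly:
  "B \<subseteq> coords \<Longrightarrow> transform (adjacency_poly cs H) B = (\<Prod>c\<leftarrow>cs. theta (card B) - c) * transform H B"
proof (induction cs arbitrary: H)
  case (Cons c cs)
  have "transform (\<lambda>A. adjacency H A - c * H A) B = (theta (card B) - c) * transform H B"
    using transform_diff[of "adjacency H" "\<lambda>A. c * H A" B] transform_scale[of c H] transform_adjacency[OF Cons.prems]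
    by (simp add: algebra_simps)
  moreover have "transform (adjacency_poly (c # cs) H) B
      = (\<Prod>c\<leftarrow>cs. theta (card B) - c) * transform (\<lambda>A. adjacency H A - c * H A) B"
    using Cons by simp
  ultimately show ?case by (simp add: mult_ac)
qed simp

lemma lowest_level_adjacency:
  assumes ps: "disjoint_pairs ps" "1 \<le> length ps" and H: "antisymmetric ps H"
    and below: "\<And>j. j < m \<Longrightarrow> level_sum ps H j = 0" and nz: "level_sum ps H m \<noteq> 0"
    and m: "length ps < m"
  shows "\<And>j. j < m - 1 \<Longrightarrow> level_sum ps (\<lambda>A. adjacency H A - c * H A) j = 0"
    and "level_sum ps (\<lambda>A. adjacency H A - c * H A) (m - 1) \<noteq> 0"
proof -
  fix j assume j: "j < m - 1"
  show "level_sum ps (\<lambda>A. adjacency H A - c * H A) j = 0"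
  proof (cases "j = 0")
    case True
    have "0 < length ps" using ps(2) by linarith
    then have "adapted_level ps 0 = {}" by (rule adapted_level_empty[OF ps(1)])
    then show ?thesis using True by (simp add: level_sum_def)
  next
    case False
    then show ?thesis using level_sum_adjacency[OF ps(1) H, of j] below j by (simp add: level_sum_diff)
  qed
next
  have "1 \<le> m - 1" using m ps(2) by linarith
  then have "level_sum ps (\<lambda>A. adjacency H A - c * H A) (m - 1) = of_nat (m - length ps) * level_sum ps H m"
    using level_sum_adjacency[OF ps(1) H] below m by (simp add: level_sum_diff)
  then show "level_sum ps (\<lambda>A. adjacency H A - c * H A) (m - 1) \<noteq> 0" using nz m by simp
qed

lemma lowest_level_adjacency_poly:
  assumes ps: "disjoint_pairs ps" "1 \<le> length ps"
  shows "antisymmetric ps H \<Longrightarrow> (\<And>j. j < m \<Longrightarrow> level_sum ps H j = 0) \<Longrightarrow> level_sum ps H m \<noteq> 0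
    \<Longrightarrow> length ps + length cs \<le> m \<Longrightarrow> level_sum ps (adjacency_poly cs H) (m - length cs) \<noteq> 0"
proof (induction cs arbitrary: H m)
  case (Cons c cs)
  have m: "length ps < m" using Cons.prems(4) by simp
  note step = lowest_level_adjacency[OF ps Cons.prems(1-3) m, where c=c]
  have "level_sum ps (adjacency_poly cs (\<lambda>A. adjacency H A - c * H A)) (m - 1 - length cs) \<noteq> 0"
    by (rule Cons.IH[OF antisymmetric_adjacency[OF ps(1) Cons.prems(1)]]) (use step Cons.prems(4) in auto)
  then show ?case by (simp add: diff_diff_left)
qed simp

text \<open>Each factor \<open>A - c\<close> lowers the lowest level with a nonzero level sum by exactly one.\<close>
lemma level_sums_vanish_if_adjacency_poly_zero:
  assumes ps: "disjoint_pairs ps" "1 \<le> length ps" and H: "antisymmetric ps H"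
    and below: "\<And>j. j < length ps + length cs \<Longrightarrow> level_sum ps H j = 0"
    and zero: "\<And>A. A \<subseteq> coords \<Longrightarrow> adjacency_poly cs H A = 0"
  shows "level_sum ps H k = 0"
proof (rule ccontr)
  assume "level_sum ps H k \<noteq> 0"
  define m where "m = (LEAST j. level_sum ps H j \<noteq> 0)"
  have m: "level_sum ps H m \<noteq> 0" unfolding m_def by (rule LeastI) fact
  have "\<And>j. j < m \<Longrightarrow> level_sum ps H j = 0" unfolding m_def using not_less_Least by blast
  moreover note m
  moreover have "length ps + length cs \<le> m" using below m by (meson not_le)
  ultimately have "level_sum ps (adjacency_poly cs H) (m - length cs) \<noteq> 0"
    by (rule lowest_level_adjacency_poly[OF ps H])
  moreover have "level_sum ps (adjacency_poly cs H) (m - length cs) = 0"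
    using zero by (intro level_sum_level_zero)
  ultimately show False by contradiction
qed

text \<open>The transform of the antisymmetrization is supported on the at most m levels j in J, so
  \<open>\<Prod>j\<in>J. (A - \<theta>\<^sub>j)\<close> in the adjacency operator A annihilates it.\<close>
lemma level_sums_antisymmetrize_vanish:
  assumes ps: "disjoint_pairs ps" "1 \<le> length ps"
    and low: "\<And>A. A \<subseteq> coords \<Longrightarrow> 1 \<le> card A \<Longrightarrow> card A < length ps + m \<Longrightarrow> F A = 0"
    and few: "card {j. length ps \<le> j \<and> j \<le> D - length ps \<and>
                      (\<exists>B\<subseteq>coords. card B = j \<and> transform F B \<noteq> 0)} \<le> m"
  shows "level_sum ps (antisymmetrize ps F) k = 0"
proof -
  define G where "G = antisymmetrize ps F"
  define J where "J = {j. length ps \<le> j \<and> j \<le> D - length ps \<and> (\<exists>B\<subseteq>coords. card B = j \<and> transform F B \<noteq> 0)}"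
  define cs where "cs = map theta (sorted_list_of_set J)"
  have "finite J" unfolding J_def by (rule finite_subset[of _ "{..D}"]) auto
  then have cs: "length cs \<le> m" "set cs = theta ` J" using few unfolding cs_def J_def by simp_all
  have "transform (adjacency_poly cs G) B = 0" if B: "B \<subseteq> coords" for B
  proof (cases "transform G B = 0")
    case False
    then have nz: "antisymmetrize ps (transform F) B \<noteq> 0"
      using transform_antisymmetrize[OF ps(1) B] unfolding G_def by simp
    then have "\<exists>B'\<subseteq>coords. card B' = card B \<and> transform F B' \<noteq> 0"
      using antisymmetrize_level_zero[OF ps(1) _ B refl, of "transform F"] by blast
    moreover have "length ps \<le> card B \<and> card B \<le> D - length ps"
      using antisymmetric_support_card[OF ps(1) antisymmetric_antisymmetrize[OF ps(1)] B nz] .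
    ultimately have "card B \<in> J" unfolding J_def by blast
    then show ?thesis using transform_adjacency_poly[OF B] cs(2) by (auto simp: prod_list_zero_iff)
  qed (simp add: transform_adjacency_poly[OF that])
  then have "adjacency_poly cs G A = 0" if "A \<subseteq> coords" for A
    using transform_eq_zero_imp that by blast
  moreover have "level_sum ps G j = 0" if "j < length ps + length cs" for j
  proof (cases "j < length ps")
    case True then show ?thesis using adapted_level_empty[OF ps(1)] by (simp add: level_sum_def)
  next
    case False
    then show ?thesis unfolding G_def
      using that cs(1) ps(2) by (intro level_sum_level_zero antisymmetrize_level_zero[OF ps(1)] low) auto
  qed
  ultimately show ?thesis
    using level_sums_vanish_if_adjacency_poly_zero[OF ps antisymmetric_antisymmetrize[OF ps(1)]]
    unfolding G_def by blast
qed

section \<open>Level sums of the transform\<close>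

lemma prod_coords_split:
  assumes "disjoint_pairs ps"
  shows "(\<Prod>i\<in>coords. g i) = (\<Prod>i\<in>free_coords ps. g i) * (\<Prod>i\<in>firsts ps. g i) * (\<Prod>i\<in>snd ` set ps. g i)"
proof -
  have "pair_points ps \<subseteq> coords" using disjoint_pairsD(4)[OF assms] .
  then have "(\<Prod>i\<in>coords. g i) = (\<Prod>i\<in>free_coords ps. g i) * (\<Prod>i\<in>pair_points ps. g i)"
    unfolding free_coords_def by (metis Diff_partition finite_atLeastLessThan finite_subset prod.subset_diff)
  also have "(\<Prod>i\<in>pair_points ps. g i) = (\<Prod>i\<in>firsts ps. g i) * (\<Prod>i\<in>snd ` set ps. g i)"
    unfolding pair_points_def firsts_def[symmetric]
    by (rule prod.union_disjoint) (use disjoint_pairsD(3)[OF assms] in \<open>auto simp: firsts_def\<close>)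
  finally show ?thesis by (simp add: mult.assoc)
qed

lemma sum_adapted_by_level:
  fixes g :: "nat set \<Rightarrow> complex"
  shows "(\<Sum>A\<in>adapted ps. g A * h (card A)) = (\<Sum>k\<le>D. h k * (\<Sum>A\<in>adapted_level ps k. g A))"
proof -
  have "(\<Sum>A\<in>adapted ps. g A * h (card A))
      = (\<Sum>k\<le>D. \<Sum>A\<in>{A \<in> adapted ps. card A = k}. g A * h (card A))"
    by (rule sum.group[symmetric]) (auto simp: finite_adapted adapted_def card_le_D)
  also have "\<dots> = (\<Sum>k\<le>D. h k * (\<Sum>A\<in>adapted_level ps k. g A))"
  proof (intro sum.cong refl)
    fix k
    have "(\<Sum>A\<in>{A \<in> adapted ps. card A = k}. g A * h (card A)) = (\<Sum>A\<in>adapted_level ps k. h k * g A)"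
      unfolding adapted_level_def by (intro sum.cong refl) (simp add: mult.commute)
    then show "(\<Sum>A\<in>{A \<in> adapted ps. card A = k}. g A * h (card A)) = h k * (\<Sum>A\<in>adapted_level ps k. g A)"
      by (simp add: sum_distrib_left)
  qed
  finally show ?thesis .
qed

lemma adapted_image_Pow:
  assumes ps: "disjoint_pairs ps"
  shows "adapted ps = (\<lambda>X. X \<union> firsts ps) ` Pow (free_coords ps)"
proof
  show "adapted ps \<subseteq> (\<lambda>X. X \<union> firsts ps) ` Pow (free_coords ps)"
  proof
    fix A assume "A \<in> adapted ps"
    then have "A = (A \<inter> free_coords ps) \<union> firsts ps"
      using firsts_subset_pair_points[of ps] by (auto simp: adapted_def free_coords_def)
    then show "A \<in> (\<lambda>X. X \<union> firsts ps) ` Pow (free_coords ps)" by blast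
  qed
  show "(\<lambda>X. X \<union> firsts ps) ` Pow (free_coords ps) \<subseteq> adapted ps"
    using disjoint_pairsD(4)[OF ps] firsts_subset_pair_points[of ps]
    by (auto simp: adapted_def free_coords_def)
qed

lemma inj_on_Un_firsts: "disjoint_pairs ps \<Longrightarrow> inj_on (\<lambda>X. X \<union> firsts ps) (Pow (free_coords ps))"
  using firsts_subset_pair_points[of ps] by (auto simp: inj_on_def free_coords_def)

lemma sum_adapted_prod:
  fixes f :: "nat \<Rightarrow> bool \<Rightarrow> complex"
  assumes ps: "disjoint_pairs ps"
  shows "(\<Sum>A\<in>adapted ps. \<Prod>i\<in>coords. f i (i \<in> A))
     = (\<Prod>i\<in>free_coords ps. f i True + f i False) * (\<Prod>i\<in>firsts ps. f i True) * (\<Prod>i\<in>snd ` set ps. f i False)"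
proof -
  have disj: "firsts ps \<inter> snd ` set ps = {}" "firsts ps \<inter> free_coords ps = {}"
    using disjoint_pairsD(3)[OF ps] firsts_subset_pair_points[of ps] by (auto simp: free_coords_def)
  have "(\<Sum>A\<in>adapted ps. \<Prod>i\<in>coords. f i (i \<in> A))
      = (\<Sum>X\<in>Pow (free_coords ps). \<Prod>i\<in>coords. f i (i \<in> X \<union> firsts ps))"
    by (simp add: adapted_image_Pow[OF ps] inj_on_Un_firsts[OF ps] sum.reindex)
  also have "\<dots> = (\<Sum>X\<in>Pow (free_coords ps). (\<Prod>i\<in>free_coords ps. f i (i \<in> X))
                    * (\<Prod>i\<in>firsts ps. f i True) * (\<Prod>i\<in>snd ` set ps. f i False))"
  proof (intro sum.cong refl)
    fix X assume X: "X \<in> Pow (free_coords ps)"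
    have "(\<Prod>i\<in>free_coords ps. f i (i \<in> X \<union> firsts ps)) = (\<Prod>i\<in>free_coords ps. f i (i \<in> X))"
    proof (intro prod.cong refl)
      fix i assume "i \<in> free_coords ps"
      then have "i \<notin> firsts ps" using disj(2) by blast
      then show "f i (i \<in> X \<union> firsts ps) = f i (i \<in> X)" by simp
    qed
    moreover have "(\<Prod>i\<in>firsts ps. f i (i \<in> X \<union> firsts ps)) = (\<Prod>i\<in>firsts ps. f i True)"
      by (intro prod.cong) auto
    moreover have "(\<Prod>i\<in>snd ` set ps. f i (i \<in> X \<union> firsts ps)) = (\<Prod>i\<in>snd ` set ps. f i False)"
    proof (intro prod.cong refl)
      fix i assume "i \<in> snd ` set ps"
      then have "i \<notin> X \<union> firsts ps" using X disj(1) by (auto simp: free_coords_def pair_points_def)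
      then show "f i (i \<in> X \<union> firsts ps) = f i False" by simp
    qed
    ultimately show "(\<Prod>i\<in>coords. f i (i \<in> X \<union> firsts ps)) = (\<Prod>i\<in>free_coords ps. f i (i \<in> X))
                    * (\<Prod>i\<in>firsts ps. f i True) * (\<Prod>i\<in>snd ` set ps. f i False)"
      using prod_coords_split[OF ps, of "\<lambda>i. f i (i \<in> X \<union> firsts ps)"] by simp
  qed
  also have "\<dots> = (\<Sum>X\<in>Pow (free_coords ps). \<Prod>i\<in>free_coords ps. f i (i \<in> X))
                 * (\<Prod>i\<in>firsts ps. f i True) * (\<Prod>i\<in>snd ` set ps. f i False)"
    by (simp only: sum_distrib_right)
  also have "(\<Sum>X\<in>Pow (free_coords ps). \<Prod>i\<in>free_coords ps. f i (i \<in> X)) = (\<Prod>i\<in>free_coords ps. f i True + f i False)"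
    by (rule sum_Pow_prod_mem) (simp add: free_coords_def)
  finally show ?thesis .
qed

lemma sum_antisymmetric_transpose:
  fixes H w :: "nat set \<Rightarrow> complex"
  assumes "finite S" "a \<noteq> b"
    and closed: "\<And>B. B \<in> S \<Longrightarrow> transpose a b ` B \<in> S"
    and H: "\<And>B. B \<in> S \<Longrightarrow> H (transpose a b ` B) = - H B"
  shows "(\<Sum>B\<in>S. H B * w B) = (\<Sum>B\<in>{B \<in> S. a \<in> B \<and> b \<notin> B}. H B * (w B - w (transpose a b ` B)))"
proof -
  let ?T = "transpose a b"
  define S1 where "S1 = {B \<in> S. a \<in> B \<and> b \<notin> B}"
  define S2 where "S2 = {B \<in> S. a \<notin> B \<and> b \<in> B}"
  have "(\<Sum>B\<in>S. H B * w B) = (\<Sum>B\<in>S1 \<union> S2. H B * w B)"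
  proof (rule sum.mono_neutral_right[OF assms(1)])
    show "\<forall>B\<in>S - (S1 \<union> S2). H B * w B = 0"
    proof
      fix B assume "B \<in> S - (S1 \<union> S2)"
      then have "B \<in> S" "?T ` B = B" by (auto simp: S1_def S2_def intro!: transpose_image_eq)
      then show "H B * w B = 0" using H[of B] by simp
    qed
  qed (auto simp: S1_def S2_def)
  also have "\<dots> = (\<Sum>B\<in>S1. H B * w B) + (\<Sum>B\<in>S2. H B * w B)"
    by (rule sum.union_disjoint) (use assms(1) in \<open>auto simp: S1_def S2_def\<close>)
  also have "(\<Sum>B\<in>S2. H B * w B) = (\<Sum>B\<in>S1. H (?T ` B) * w (?T ` B))"
  proof (rule sum.reindex_bij_witness[where i="image ?T" and j="image ?T"])
    show "?T ` B \<in> S1" if "B \<in> S2" for B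
      using that closed by (auto simp: S1_def S2_def in_transpose_image_iff)
    show "?T ` B \<in> S2" if "B \<in> S1" for B
      using that closed by (auto simp: S1_def S2_def in_transpose_image_iff)
  qed auto
  also have "(\<Sum>B\<in>S1. H B * w B) + (\<Sum>B\<in>S1. H (?T ` B) * w (?T ` B))
      = (\<Sum>B\<in>S1. H B * (w B - w (?T ` B)))"
    unfolding sum.distrib[symmetric] by (intro sum.cong refl) (simp add: S1_def H algebra_simps)
  finally show ?thesis unfolding S1_def .
qed

lemma sum_antisymmetric_weight_pair:
  fixes psi :: "nat \<Rightarrow> bool \<Rightarrow> complex"
  assumes ab: "a \<in> coords" "b \<in> coords" "a \<noteq> b" "a \<notin> Q" "b \<notin> Q" and "\<gamma> \<subseteq> Q"
    and H: "\<And>B. B \<subseteq> coords \<Longrightarrow> H (transpose a b ` B) = - H B"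
  shows "(\<Sum>B\<in>{B \<in> Pow coords. B \<inter> Q = \<gamma>}. H B * (\<Prod>i\<in>coords - Q. psi i (i \<in> B)))
    = (psi a True * psi b False - psi a False * psi b True) *
      (\<Sum>B\<in>{B \<in> Pow coords. B \<inter> insert a (insert b Q) = insert a \<gamma>}.
         H B * (\<Prod>i\<in>coords - insert a (insert b Q). psi i (i \<in> B)))"
proof -
  let ?T = "transpose a b"
  define R where "R B = (\<Prod>i\<in>coords - insert a (insert b Q). psi i (i \<in> B))" for B
  have split: "(\<Prod>i\<in>coords - Q. psi i (i \<in> B)) = psi a (a \<in> B) * psi b (b \<in> B) * R B" for B
  proof -
    have "(\<Prod>i\<in>coords - Q. psi i (i \<in> B)) = psi a (a \<in> B) * (\<Prod>i\<in>coords - Q - {a}. psi i (i \<in> B))"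
      using ab by (subst prod.remove[of _ a]) auto
    also have "(\<Prod>i\<in>coords - Q - {a}. psi i (i \<in> B)) = psi b (b \<in> B) * R B"
      unfolding R_def using ab by (subst prod.remove[of _ b]) (auto intro!: prod.cong)
    finally show ?thesis by (simp add: mult.assoc)
  qed
  have R_transpose: "R (?T ` B) = R B" for B
    unfolding R_def by (intro prod.cong refl) (auto simp: in_transpose_image_iff)
  have "(\<Sum>B\<in>{B \<in> Pow coords. B \<inter> Q = \<gamma>}. H B * (\<Prod>i\<in>coords - Q. psi i (i \<in> B)))
      = (\<Sum>B\<in>{B \<in> {B \<in> Pow coords. B \<inter> Q = \<gamma>}. a \<in> B \<and> b \<notin> B}.
           H B * ((\<Prod>i\<in>coords - Q. psi i (i \<in> B)) - (\<Prod>i\<in>coords - Q. psi i (i \<in> ?T ` B))))"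
  proof (rule sum_antisymmetric_transpose)
    show "?T ` B \<in> {B \<in> Pow coords. B \<inter> Q = \<gamma>}" if "B \<in> {B \<in> Pow coords. B \<inter> Q = \<gamma>}" for B
      using that transpose_image_subset[OF ab(1,2)] transpose_image_Int_fixed[OF ab(4,5)] by auto
  qed (use ab H in auto)
  also have "\<dots> = (\<Sum>B\<in>{B \<in> Pow coords. B \<inter> insert a (insert b Q) = insert a \<gamma>}.
           (psi a True * psi b False - psi a False * psi b True) * (H B * R B))"
  proof (rule sum.cong)
    show "{B \<in> {B \<in> Pow coords. B \<inter> Q = \<gamma>}. a \<in> B \<and> b \<notin> B}
        = {B \<in> Pow coords. B \<inter> insert a (insert b Q) = insert a \<gamma>}"
      using ab \<open>\<gamma> \<subseteq> Q\<close> by auto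
  next
    fix B assume "B \<in> {B \<in> Pow coords. B \<inter> insert a (insert b Q) = insert a \<gamma>}"
    then have "a \<in> B" "b \<notin> B" "a \<notin> ?T ` B" "b \<in> ?T ` B"
      using ab \<open>\<gamma> \<subseteq> Q\<close> by (auto simp: in_transpose_image_iff)
    then show "H B * ((\<Prod>i\<in>coords - Q. psi i (i \<in> B)) - (\<Prod>i\<in>coords - Q. psi i (i \<in> ?T ` B)))
        = (psi a True * psi b False - psi a False * psi b True) * (H B * R B)"
      unfolding split R_transpose by (simp add: algebra_simps)
  qed
  finally show ?thesis unfolding R_def by (simp only: sum_distrib_left)
qed

lemma sum_antisymmetric_weight_pairs:
  fixes psi :: "nat \<Rightarrow> bool \<Rightarrow> complex"
  shows "disjoint_pairs ps \<Longrightarrow> antisymmetric ps H \<Longrightarrow> Q \<inter> pair_points ps = {} \<Longrightarrow> \<gamma> \<subseteq> Q \<Longrightarrow>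
    \<exists>c. (\<Sum>B\<in>{B \<in> Pow coords. B \<inter> Q = \<gamma>}. H B * (\<Prod>i\<in>coords - Q. psi i (i \<in> B)))
       = c * (\<Sum>B\<in>{B \<in> Pow coords. B \<inter> (Q \<union> pair_points ps) = \<gamma> \<union> firsts ps}.
                H B * (\<Prod>i\<in>coords - (Q \<union> pair_points ps). psi i (i \<in> B)))"
proof (induction ps arbitrary: Q \<gamma>)
  case Nil
  then show ?case by (intro exI[of _ 1]) (simp add: pair_points_def firsts_def)
next
  case (Cons p ps)
  obtain a b where p: "p = (a, b)" by force
  have ps: "disjoint_pairs ps" and ab: "a \<noteq> b" "a \<notin> pair_points ps" "b \<notin> pair_points ps" "a \<in> coords" "b \<in> coords"
    using Cons.prems(1) by (auto simp: disjoint_pairs_Cons p)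
  have abQ: "a \<notin> Q" "b \<notin> Q" using Cons.prems(3) p by auto
  have "antisymmetric ps H" "\<And>B. B \<subseteq> coords \<Longrightarrow> H (transpose a b ` B) = - H B"
    using Cons.prems(2) p by (auto simp: antisymmetric_def)
  note pair = sum_antisymmetric_weight_pair[where psi=psi and H=H, OF ab(4,5,1) abQ Cons.prems(4) this(2)]
  let ?Q = "insert a (insert b Q)" and ?\<gamma> = "insert a \<gamma>"
  have "?Q \<inter> pair_points ps = {}" "?\<gamma> \<subseteq> ?Q" using Cons.prems(3,4) ab by auto
  then obtain c where c: "(\<Sum>B\<in>{B \<in> Pow coords. B \<inter> ?Q = ?\<gamma>}. H B * (\<Prod>i\<in>coords - ?Q. psi i (i \<in> B)))
      = c * (\<Sum>B\<in>{B \<in> Pow coords. B \<inter> (?Q \<union> pair_points ps) = ?\<gamma> \<union> firsts ps}.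
               H B * (\<Prod>i\<in>coords - (?Q \<union> pair_points ps). psi i (i \<in> B)))"
    using Cons.IH[OF ps \<open>antisymmetric ps H\<close>] by blast
  have "?Q \<union> pair_points ps = Q \<union> pair_points (p # ps)" "?\<gamma> \<union> firsts ps = \<gamma> \<union> firsts (p # ps)"
    using p by auto
  with pair c have "(\<Sum>B\<in>{B \<in> Pow coords. B \<inter> Q = \<gamma>}. H B * (\<Prod>i\<in>coords - Q. psi i (i \<in> B)))
      = ((psi a True * psi b False - psi a False * psi b True) * c)
        * (\<Sum>B\<in>{B \<in> Pow coords. B \<inter> (Q \<union> pair_points (p # ps)) = \<gamma> \<union> firsts (p # ps)}.
             H B * (\<Prod>i\<in>coords - (Q \<union> pair_points (p # ps)). psi i (i \<in> B)))"
    by (simp only: mult.assoc)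
  then show ?case by blast
qed

definition transform_weight :: "(nat \<times> nat) list \<Rightarrow> complex \<Rightarrow> nat \<Rightarrow> bool \<Rightarrow> complex" where
  "transform_weight ps z i y =
     (if i \<in> firsts ps then char1 y True * z
      else if i \<in> snd ` set ps then char1 y False
      else char1 y True * z + char1 y False)"

lemma generating_level_sum_transform:
  assumes ps: "disjoint_pairs ps"
  shows "(\<Sum>k\<le>D. level_sum ps (transform H) k * z ^ k)
       = (\<Sum>B\<in>Pow coords. H B * (\<Prod>i\<in>coords. transform_weight ps z i (i \<in> B)))"
proof -
  have "(\<Sum>k\<le>D. level_sum ps (transform H) k * z ^ k) = (\<Sum>A\<in>adapted ps. transform H A * z ^ card A)"
    by (subst sum_adapted_by_level) (simp add: level_sum_def mult.commute)
  also have "\<dots> = (\<Sum>B\<in>Pow coords. H B * (\<Sum>A\<in>adapted ps. char_kernel B A * z ^ card A))"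
    unfolding transform_def sum_distrib_right sum_distrib_left
    by (subst sum.swap) (simp add: mult.assoc)
  also have "\<dots> = (\<Sum>B\<in>Pow coords. H B * (\<Prod>i\<in>coords. transform_weight ps z i (i \<in> B)))"
  proof (intro sum.cong refl arg_cong2[where f=times])
    fix B
    have "(\<Sum>A\<in>adapted ps. char_kernel B A * z ^ card A)
        = (\<Sum>A\<in>adapted ps. \<Prod>i\<in>coords. char1 (i \<in> B) (i \<in> A) * (if i \<in> A then z else 1))"
    proof (intro sum.cong refl)
      fix A assume "A \<in> adapted ps"
      then have "(\<Prod>i\<in>coords. if i \<in> A then z else 1) = z ^ card A"
        using prod_mem_split[of coords A "\<lambda>i x. if x then z else 1"] by (simp add: adapted_def)
      then show "char_kernel B A * z ^ card A = (\<Prod>i\<in>coords. char1 (i \<in> B) (i \<in> A) * (if i \<in> A then z else 1))"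
        unfolding char_kernel_def by (simp add: prod.distrib)
    qed
    also have "\<dots> = (\<Prod>i\<in>free_coords ps. char1 (i \<in> B) True * z + char1 (i \<in> B) False)
        * (\<Prod>i\<in>firsts ps. char1 (i \<in> B) True * z) * (\<Prod>i\<in>snd ` set ps. char1 (i \<in> B) False)"
      using sum_adapted_prod[OF ps, of "\<lambda>i x. char1 (i \<in> B) x * (if x then z else 1)"] by simp
    also have "\<dots> = (\<Prod>i\<in>coords. transform_weight ps z i (i \<in> B))"
      unfolding prod_coords_split[OF ps, of "\<lambda>i. transform_weight ps z i (i \<in> B)"]
      using disjoint_pairsD(3)[OF ps] firsts_subset_pair_points[of ps]
      by (intro arg_cong2[where f=times] prod.cong refl)
         (auto simp: transform_weight_def free_coords_def pair_points_def)
    finally show "(\<Sum>A\<in>adapted ps. char_kernel B A * z ^ card A) = (\<Prod>i\<in>coords. transform_weight ps z i (i \<in> B))" .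
  qed
  finally show ?thesis .
qed

lemma generating_level_sum_free:
  assumes ps: "disjoint_pairs ps"
  shows "(\<Sum>B\<in>adapted ps. H B * (\<Prod>i\<in>free_coords ps. transform_weight ps z i (i \<in> B)))
       = (\<Sum>k\<le>D. (1 - z) ^ (k - length ps) * (1 + (qc - 1) * z) ^ (card (free_coords ps) - (k - length ps))
                  * level_sum ps H k)"
proof -
  have "(\<Prod>i\<in>free_coords ps. transform_weight ps z i (i \<in> B))
      = (1 - z) ^ (card B - length ps) * (1 + (qc - 1) * z) ^ (card (free_coords ps) - (card B - length ps))"
    if B: "B \<in> adapted ps" for B
  proof -
    have "(\<Prod>i\<in>free_coords ps. transform_weight ps z i (i \<in> B))
        = (\<Prod>i\<in>free_coords ps. char1 (i \<in> B) True * z + char1 (i \<in> B) False)"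
      by (intro prod.cong refl) (auto simp: transform_weight_def free_coords_def pair_points_def firsts_def)
    also have "\<dots> = (1 - z) ^ card (B \<inter> free_coords ps) * (1 + (qc - 1) * z) ^ card (free_coords ps - B)"
      using prod_mem_split[of "free_coords ps" "B \<inter> free_coords ps" "\<lambda>i x. char1 x True * z + char1 x False"]
      by (simp add: free_coords_def char1_def Diff_Int algebra_simps)
    also have "\<dots> = (1 - z) ^ (card B - length ps) * (1 + (qc - 1) * z) ^ (card (free_coords ps) - (card B - length ps))"
      using adapted_level_card[OF ps, of B "card B"] B by (simp add: adapted_level_def)
    finally show ?thesis .
  qed
  then have "(\<Sum>B\<in>adapted ps. H B * (\<Prod>i\<in>free_coords ps. transform_weight ps z i (i \<in> B)))
      = (\<Sum>B\<in>adapted ps. H B * ((1 - z) ^ (card B - length ps)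
           * (1 + (qc - 1) * z) ^ (card (free_coords ps) - (card B - length ps))))"
    by (intro sum.cong) auto
  also have "\<dots> = (\<Sum>k\<le>D. (1 - z) ^ (k - length ps) * (1 + (qc - 1) * z) ^ (card (free_coords ps) - (k - length ps))
                  * level_sum ps H k)"
    unfolding level_sum_def by (rule sum_adapted_by_level)
  finally show ?thesis .
qed

text \<open>Comparing generating functions in z, the level sums of the transform of an antisymmetric
  function are combinations of its own level sums.\<close>
lemma level_sum_transform:
  assumes ps: "disjoint_pairs ps" and H: "antisymmetric ps H" and zero: "\<And>j. level_sum ps H j = 0"
  shows "level_sum ps (transform H) k = 0"
proof (cases "k \<le> D")
  case False
  then have "adapted_level ps k = {}" using card_le_D by (fastforce simp: adapted_level_def adapted_def)
  then show ?thesis by (simp add: level_sum_def)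
next
  case True
  have "(\<Sum>k\<le>D. level_sum ps (transform H) k * z ^ k) = 0" for z
  proof -
    obtain c where "(\<Sum>B\<in>Pow coords. H B * (\<Prod>i\<in>coords. transform_weight ps z i (i \<in> B)))
        = c * (\<Sum>B\<in>adapted ps. H B * (\<Prod>i\<in>free_coords ps. transform_weight ps z i (i \<in> B)))"
      using sum_antisymmetric_weight_pairs[OF ps H, of "{}" "{}" "transform_weight ps z"]
      by (auto simp: adapted_def free_coords_def Pow_def)
    then show ?thesis
      by (simp add: generating_level_sum_transform[OF ps] generating_level_sum_free[OF ps] zero)
  qed
  then show ?thesis using polyfun_eq_0 True by blast
qed

text \<open>Since the transform is an involution up to the factor \<open>q\<^sup>D\<close>, the roles of F and its transform
  in the previous lemma can be exchanged.\<close>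
lemma level_sums_antisymmetrize_vanish_dual:
  assumes ps: "disjoint_pairs ps" "1 \<le> length ps"
    and low: "\<And>B. B \<subseteq> coords \<Longrightarrow> 1 \<le> card B \<Longrightarrow> card B < length ps + m \<Longrightarrow> transform F B = 0"
    and few: "card {i. length ps \<le> i \<and> i \<le> D - length ps \<and> (\<exists>A\<subseteq>coords. card A = i \<and> F A \<noteq> 0)} \<le> m"
  shows "level_sum ps (antisymmetrize ps F) k = 0"
proof -
  have "(\<exists>B\<subseteq>coords. card B = j \<and> transform (transform F) B \<noteq> 0) \<longleftrightarrow> (\<exists>A\<subseteq>coords. card A = j \<and> F A \<noteq> 0)" for j
    using transform_transform qc_nonzero by auto
  then have "level_sum ps (antisymmetrize ps (transform F)) j = 0" for j
    using level_sums_antisymmetrize_vanish[OF ps low] few by simp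
  then have "level_sum ps (transform (antisymmetrize ps (transform F))) k = 0"
    by (rule level_sum_transform[OF ps(1) antisymmetric_antisymmetrize[OF ps(1)]])
  moreover have "transform (antisymmetrize ps (transform F)) A = qc ^ D * antisymmetrize ps F A"
    if A: "A \<subseteq> coords" for A
  proof -
    have "transform (transform (antisymmetrize ps F)) = transform (antisymmetrize ps (transform F))"
      by (rule transform_cong) (simp add: transform_antisymmetrize[OF ps(1)])
    then show ?thesis using transform_transform[OF A] by metis
  qed
  ultimately have "qc ^ D * level_sum ps (antisymmetrize ps F) k = 0"
    unfolding level_sum_def sum_distrib_left adapted_level_def adapted_def by simp
  then show ?thesis using qc_nonzero by simp
qed

section \<open>Supports avoiding or containing a t-set\<close>

definition placed :: "bool \<Rightarrow> nat set \<Rightarrow> nat set \<Rightarrow> bool" where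
  "placed avoid S A \<longleftrightarrow> (if avoid then A \<inter> S = {} else S \<subseteq> A)"

definition placed_sum :: "bool \<Rightarrow> (nat \<times> nat) list \<Rightarrow> (nat set \<Rightarrow> complex) \<Rightarrow> nat set \<Rightarrow> nat \<Rightarrow> complex" where
  "placed_sum avoid ps G S k = (\<Sum>A\<in>{A \<in> adapted_level ps k. placed avoid S A}. G A)"

lemma placed_sum_exchange:
  assumes ps: "disjoint_pairs ps" and S: "S \<subseteq> free_coords ps" and a: "a \<in> S"
    and b: "b \<in> free_coords ps - S"
  shows "placed_sum avoid ps G S k - placed_sum avoid ps G (insert b (S - {a})) k
     = placed_sum avoid ((if avoid then (b, a) else (a, b)) # ps) (\<lambda>A. G A - G (transpose a b ` A)) (S - {a}) k"
proof -
  let ?T = "transpose a b"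
  define X where "X = {A \<in> adapted_level ps k. placed avoid S A}"
  have ab: "a \<in> coords" "b \<in> coords" "a \<notin> pair_points ps" "b \<notin> pair_points ps" "a \<noteq> b"
    using a b S by (auto simp: free_coords_def)
  have adapted_T: "?T ` A \<in> adapted_level ps k" if "A \<in> adapted_level ps k" for A
    using that transpose_image_subset[OF ab(1,2)] transpose_image_Int_fixed[OF ab(3,4)]
    by (auto simp: adapted_level_def adapted_def)
  have placed_T: "placed avoid (insert b (S - {a})) (?T ` A) \<longleftrightarrow> placed avoid S A" for A
    using a b ab(5) by (auto simp: placed_def in_transpose_image_iff transpose_def split: if_splits)
  then have placed_T': "placed avoid S (?T ` A) \<longleftrightarrow> placed avoid (insert b (S - {a})) A" for A
    by (metis transpose_image_involutory)
  have "placed_sum avoid ps G (insert b (S - {a})) k = (\<Sum>A\<in>X. G (?T ` A))"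
    unfolding placed_sum_def X_def
    by (rule sum.reindex_bij_witness[where i="image ?T" and j="image ?T"])
       (use adapted_T placed_T placed_T' in auto)
  then have "placed_sum avoid ps G S k - placed_sum avoid ps G (insert b (S - {a})) k
      = (\<Sum>A\<in>X. G A - G (?T ` A))"
    unfolding placed_sum_def X_def by (simp add: sum_subtractf)
  also have "\<dots> = (\<Sum>A\<in>{A \<in> X. if avoid then b \<in> A else b \<notin> A}. G A - G (?T ` A))"
  proof (rule sum.mono_neutral_right)
    show "\<forall>A\<in>X - {A \<in> X. if avoid then b \<in> A else b \<notin> A}. G A - G (?T ` A) = 0"
    proof
      fix A assume "A \<in> X - {A \<in> X. if avoid then b \<in> A else b \<notin> A}"
      then have "a \<in> A \<longleftrightarrow> b \<in> A" using a by (auto simp: X_def placed_def split: if_splits)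
      then show "G A - G (?T ` A) = 0" by simp
    qed
  qed (auto simp: X_def finite_adapted_level)
  also have "{A \<in> X. if avoid then b \<in> A else b \<notin> A}
      = {A \<in> adapted_level ((if avoid then (b, a) else (a, b)) # ps) k. placed avoid (S - {a}) A}"
    unfolding X_def adapted_level_def adapted_def placed_def
    using a b ab firsts_subset_pair_points[of ps] by (auto split: if_splits)
  finally show ?thesis unfolding placed_sum_def .
qed

lemma sum_placed_sum_subsets:
  assumes ps: "disjoint_pairs ps"
  shows "(\<Sum>S\<in>{S. S \<subseteq> free_coords ps \<and> card S = n}. placed_sum avoid ps G S k)
       = of_nat ((if avoid then card (free_coords ps) - (k - length ps) else k - length ps) choose n)
         * level_sum ps G k"
proof -
  let ?SS = "{S. S \<subseteq> free_coords ps \<and> card S = n}"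
  have fin: "finite (free_coords ps)" "finite ?SS" by (simp_all add: free_coords_def)
  have count: "card {S \<in> ?SS. placed avoid S A}
      = (if avoid then card (free_coords ps) - (k - length ps) else k - length ps) choose n"
    if A: "A \<in> adapted_level ps k" for A
  proof -
    let ?W = "if avoid then free_coords ps - A else free_coords ps \<inter> A"
    have "{S \<in> ?SS. placed avoid S A} = {S. S \<subseteq> ?W \<and> card S = n}"
      unfolding placed_def by auto
    then have "card {S \<in> ?SS. placed avoid S A} = card ?W choose n"
      using n_subsets[of ?W n] fin(1) by auto
    then show ?thesis using adapted_level_card[OF ps A] by (simp add: Int_commute)
  qed
  have "(\<Sum>S\<in>?SS. placed_sum avoid ps G S k) = (\<Sum>S\<in>?SS. \<Sum>A\<in>adapted_level ps k. if placed avoid S A then G A else 0)"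
    unfolding placed_sum_def by (intro sum.cong refl sum.inter_filter finite_adapted_level)
  also have "\<dots> = (\<Sum>A\<in>adapted_level ps k. of_nat (card {S \<in> ?SS. placed avoid S A}) * G A)"
    by (subst sum.swap) (simp add: sum.inter_filter[OF fin(2), symmetric])
  also have "\<dots> = (\<Sum>A\<in>adapted_level ps k.
      of_nat ((if avoid then card (free_coords ps) - (k - length ps) else k - length ps) choose n) * G A)"
    by (intro sum.cong refl) (simp only: count)
  also have "\<dots> = of_nat ((if avoid then card (free_coords ps) - (k - length ps) else k - length ps) choose n)
                  * level_sum ps G k"
    by (simp add: level_sum_def sum_distrib_left)
  finally show ?thesis .
qed

lemma free_coords_Nil [simp]: "free_coords [] = coords"
  by (simp add: free_coords_def)

lemma placed_sum_antisymmetrize_zero: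
  assumes vanish: "\<And>ps k. disjoint_pairs ps \<Longrightarrow> 1 \<le> length ps \<Longrightarrow> length ps \<le> t \<Longrightarrow>
                    level_sum ps (antisymmetrize ps F) k = 0"
  shows "disjoint_pairs ps \<Longrightarrow> 1 \<le> length ps \<Longrightarrow> length ps + n \<le> t \<Longrightarrow> S \<subseteq> free_coords ps \<Longrightarrow> card S = n
    \<Longrightarrow> placed_sum avoid ps (antisymmetrize ps F) S k = 0"
proof (induction n arbitrary: ps S k)
  case 0
  then have "S = {}" by (auto simp: free_coords_def finite_subset)
  then show ?case using vanish 0 by (simp add: placed_sum_def placed_def level_sum_def)
next
  case (Suc n)
  let ?G = "antisymmetrize ps F" and ?W = "free_coords ps"
  have exchange: "placed_sum avoid ps ?G S1 k = placed_sum avoid ps ?G (insert b (S1 - {a})) k"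
    if S1: "S1 \<subseteq> ?W" "card S1 = Suc n" "a \<in> S1" "b \<in> ?W - S1" for S1 a b
  proof -
    define p where "p = (if avoid then (b, a) else (a, b))"
    have pps: "disjoint_pairs (p # ps)"
      using Suc.prems(1) S1 by (auto simp: p_def disjoint_pairs_Cons free_coords_def)
    have "placed_sum avoid (p # ps) (antisymmetrize (p # ps) F) (S1 - {a}) k = 0"
      by (rule Suc.IH[OF pps]) (use Suc.prems S1 in \<open>auto simp: p_def free_coords_def\<close>)
    moreover have "(\<lambda>A. ?G A - ?G (transpose a b ` A)) = antisymmetrize (p # ps) F"
      by (auto simp: p_def transpose_commute)
    ultimately show ?thesis
      using placed_sum_exchange[OF Suc.prems(1) S1(1,3,4), of avoid ?G k] unfolding p_def by simp
  qed
  let ?SS = "{S1. S1 \<subseteq> ?W \<and> card S1 = Suc n}"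
  have "finite ?W" by (simp add: free_coords_def)
  have "placed_sum avoid ps ?G S1 k = placed_sum avoid ps ?G S k" if "S1 \<in> ?SS" for S1
    using exchange_invariant_imp_constant[OF \<open>finite ?W\<close> exchange] that Suc.prems(4,5) by blast
  then have "of_nat (card ?SS) * placed_sum avoid ps ?G S k = (\<Sum>S1\<in>?SS. placed_sum avoid ps ?G S1 k)"
    by simp
  also have "\<dots> = 0"
    using sum_placed_sum_subsets[OF Suc.prems(1)] vanish[OF Suc.prems(1,2)] Suc.prems(3) by simp
  finally have "of_nat (card ?SS) * placed_sum avoid ps ?G S k = 0" .
  moreover have "Suc n \<le> card ?W" using card_mono[OF \<open>finite ?W\<close> Suc.prems(4)] Suc.prems(5) by simp
  then have "card ?SS \<noteq> 0" using n_subsets[OF \<open>finite ?W\<close>, of "Suc n"] by simp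
  ultimately show ?case by simp
qed

lemma placed_sum_constant:
  assumes vanish: "\<And>ps k. disjoint_pairs ps \<Longrightarrow> 1 \<le> length ps \<Longrightarrow> length ps \<le> t \<Longrightarrow>
                    level_sum ps (antisymmetrize ps F) k = 0"
    and "1 \<le> t" "S \<subseteq> coords" "card S = t" "S' \<subseteq> coords" "card S' = t"
  shows "placed_sum avoid [] F S k = placed_sum avoid [] F S' k"
proof (rule exchange_invariant_imp_constant[of coords t, OF _ _ assms(3,5,4,6)])
  fix S1 a b assume S1: "S1 \<subseteq> coords" "card S1 = t" "a \<in> S1" "b \<in> coords - S1"
  define p where "p = (if avoid then (b, a) else (a, b))"
  have p: "disjoint_pairs [p]" using S1 by (auto simp: p_def disjoint_pairs_Cons)
  have "placed_sum avoid [p] (antisymmetrize [p] F) (S1 - {a}) k = 0"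
    by (rule placed_sum_antisymmetrize_zero[OF vanish p]) (use S1 assms(2) in \<open>auto simp: p_def free_coords_def\<close>)
  moreover have "(\<lambda>A. F A - F (transpose a b ` A)) = antisymmetrize [p] F"
    by (auto simp: p_def transpose_commute)
  ultimately show "placed_sum avoid [] F S1 k = placed_sum avoid [] F (insert b (S1 - {a})) k"
    using placed_sum_exchange[of "[]" S1 a b avoid F k] S1 unfolding p_def by simp
qed simp

section \<open>Back to the Hamming scheme\<close>

abbreviation words :: "(nat \<Rightarrow> nat) set" where "words \<equiv> hamming_space D q"

lemma words_bij_PiE: "bij_betw (\<lambda>v. restrict v coords) words (PiE coords (\<lambda>_. {0..<q}))"
proof (rule bij_betw_byWitness[where f'="\<lambda>g i. if i < D then g i else 0"])
  show "\<forall>v\<in>words. (\<lambda>i. if i < D then restrict v coords i else 0) = v"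
    unfolding hamming_space_def by (auto intro!: ext)
  show "\<forall>g\<in>PiE coords (\<lambda>_. {0..<q}). restrict (\<lambda>i. if i < D then g i else 0) coords = g"
    by (auto intro!: ext simp: PiE_def extensional_def)
qed (auto simp: hamming_space_def PiE_def)

lemma finite_words: "finite words"
  using bij_betw_finite[OF words_bij_PiE] by (simp add: finite_PiE)

lemma card_words: "card words = q ^ D"
  using bij_betw_same_card[OF words_bij_PiE] card_PiE[of coords "\<lambda>_. {0..<q}"] by simp

lemma sum_prod_words:
  fixes f :: "nat \<Rightarrow> nat \<Rightarrow> complex"
  shows "(\<Sum>v\<in>words. \<Prod>i\<in>coords. f i (v i)) = (\<Prod>i\<in>coords. \<Sum>x\<in>{0..<q}. f i x)"
proof -
  have "(\<Prod>i\<in>coords. \<Sum>x\<in>{0..<q}. f i x) = (\<Sum>g\<in>PiE coords (\<lambda>_. {0..<q}). \<Prod>i\<in>coords. f i (g i))"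
    by (rule prod_sum_PiE) auto
  also have "\<dots> = (\<Sum>v\<in>words. \<Prod>i\<in>coords. f i (restrict v coords i))"
    by (rule sum.reindex_bij_betw[OF words_bij_PiE, symmetric])
  finally show ?thesis by simp
qed

lemma krawtchouk_generating:
  assumes "i \<le> D"
  shows "(\<Sum>j\<le>D. krawtchouk D q j i * z ^ j) = (1 - z) ^ i * (1 + (qc - 1) * z) ^ (D - i)"
proof -
  have a: "(1 - z) ^ i = (\<Sum>h\<le>i. ((-1) ^ h * of_nat (i choose h)) * z ^ h)"
    using binomial_ring[of "- z" 1 i] by (simp add: power_minus[of z] mult_ac)
  have b: "(1 + (qc - 1) * z) ^ (D - i) = (\<Sum>l\<le>D - i. ((qc - 1) ^ l * of_nat ((D - i) choose l)) * z ^ l)"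
    using binomial_ring[of "(qc - 1) * z" 1 "D - i"] by (simp add: power_mult_distrib mult_ac add.commute)
  have "(1 - z) ^ i * (1 + (qc - 1) * z) ^ (D - i) = (\<Sum>r\<le>i + (D - i).
      (\<Sum>h\<le>r. ((-1) ^ h * of_nat (i choose h)) * ((qc - 1) ^ (r - h) * of_nat ((D - i) choose (r - h)))) * z ^ r)"
    unfolding a b by (rule polynomial_product) auto
  also have "\<dots> = (\<Sum>j\<le>D. krawtchouk D q j i * z ^ j)"
    using assms unfolding krawtchouk_def atLeast0AtMost by (intro sum.cong refl) (simp_all add: mult_ac)
  finally show ?thesis by simp
qed

lemma krawtchouk_generating_hdist:
  assumes "u \<in> words" "v \<in> words"
  shows "(\<Sum>j\<le>D. krawtchouk D q j (hdist D v u) * z ^ j)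
       = (\<Prod>i\<in>coords. if v i = u i then 1 + (qc - 1) * z else 1 - z)"
proof -
  let ?E = "coords \<inter> - {i. v i = u i}"
  have dist: "card ?E = hdist D v u" unfolding hdist_def by (rule arg_cong[where f=card]) auto
  then have "hdist D v u \<le> D" using card_le_D[of ?E] by auto
  have "coords \<inter> {i. v i = u i} = coords - ?E" by auto
  then have "card (coords \<inter> {i. v i = u i}) = D - card ?E" by (simp add: card_Diff_subset)
  have "(\<Prod>i\<in>coords. if v i = u i then 1 + (qc - 1) * z else 1 - z)
      = (1 + (qc - 1) * z) ^ card (coords \<inter> {i. v i = u i}) * (1 - z) ^ card ?E"
    by (subst prod.If_cases) simp_all
  also have "\<dots> = (\<Sum>j\<le>D. krawtchouk D q j (hdist D v u) * z ^ j)"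
    unfolding krawtchouk_generating[OF \<open>hdist D v u \<le> D\<close>]
      \<open>card (coords \<inter> {i. v i = u i}) = D - card ?E\<close> dist by (rule mult.commute)
  finally show ?thesis by (rule sym)
qed

lemma char_kernel_word_support:
  "char_kernel (word_support D v) B = (\<Prod>i\<in>coords. char1 (v i \<noteq> 0) (i \<in> B))"
  unfolding char_kernel_def word_support_def by (intro prod.cong refl) auto

lemma sum_char1_letters: "(\<Sum>x\<in>{0..<q}. char1 (x \<noteq> 0) b) = (if b then 0 else qc)"
proof -
  have "(\<Sum>x\<in>{0..<q}. char1 (x \<noteq> 0) True) = (\<Sum>x\<in>{0..<q}. -1 + (if x = 0 then qc else 0))"
    by (intro sum.cong refl) (auto simp: char1_def)
  also have "\<dots> = (\<Sum>x\<in>{0..<q}. -1) + (\<Sum>x\<in>{0..<q}. if x = 0 then qc else 0)"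
    by (rule sum.distrib)
  also have "\<dots> = 0" using q_ge_2 by simp
  finally show ?thesis by (cases b) (simp_all add: char1_def)
qed

lemma sum_letters_kernel:
  assumes c: "c < q"
  shows "(\<Sum>x\<in>{0..<q}. (if x = c then 1 + (qc - 1) * z else 1 - z) * char1 (x \<noteq> 0) b)
       = qc * (if b then z else 1) * char1 (c \<noteq> 0) b"
proof -
  have "(\<Sum>x\<in>{0..<q}. (if x = c then 1 + (qc - 1) * z else 1 - z) * char1 (x \<noteq> 0) b)
      = (\<Sum>x\<in>{0..<q}. (1 - z) * char1 (x \<noteq> 0) b + (if x = c then qc * z * char1 (x \<noteq> 0) b else 0))"
    by (intro sum.cong refl) (auto simp: algebra_simps)
  also have "\<dots> = (1 - z) * (\<Sum>x\<in>{0..<q}. char1 (x \<noteq> 0) b) + qc * z * char1 (c \<noteq> 0) b"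
    using c by (simp add: sum.distrib sum_distrib_left sum.delta)
  also have "\<dots> = qc * (if b then z else 1) * char1 (c \<noteq> 0) b"
    unfolding sum_char1_letters by (cases b) (auto simp: char1_def algebra_simps)
  finally show ?thesis .
qed

lemma sum_words_kernel:
  assumes u: "u \<in> words" and B: "B \<subseteq> coords"
  shows "(\<Sum>v\<in>words. (\<Prod>i\<in>coords. if v i = u i then 1 + (qc - 1) * z else 1 - z) * char_kernel (word_support D v) B)
       = qc ^ D * z ^ card B * char_kernel (word_support D u) B"
proof -
  have "(\<Sum>v\<in>words. (\<Prod>i\<in>coords. if v i = u i then 1 + (qc - 1) * z else 1 - z) * char_kernel (word_support D v) B)
      = (\<Prod>i\<in>coords. \<Sum>x\<in>{0..<q}. (if x = u i then 1 + (qc - 1) * z else 1 - z) * char1 (x \<noteq> 0) (i \<in> B))"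
    by (simp add: char_kernel_word_support prod.distrib sum_prod_words[symmetric])
  also have "\<dots> = (\<Prod>i\<in>coords. qc * (if i \<in> B then z else 1) * char1 (u i \<noteq> 0) (i \<in> B))"
    using u by (intro prod.cong refl sum_letters_kernel) (auto simp: hamming_space_def)
  also have "\<dots> = qc ^ D * (\<Prod>i\<in>coords. if i \<in> B then z else 1) * char_kernel (word_support D u) B"
    by (simp add: prod.distrib char_kernel_word_support)
  also have "(\<Prod>i\<in>coords. if i \<in> B then z else 1) = z ^ card B"
    using prod_mem_split[of coords B "\<lambda>i x. if x then z else 1"] B by simp
  finally show ?thesis .
qed

text \<open>The vector \<open>v \<mapsto> char_kernel (word_support D v) B\<close> lies in \<open>E\<^bsub>|B|\<^esub> V\<close>; in generating-function
  form, with the Krawtchouk polynomials summed against \<open>z\<^sup>j\<close>:\<close>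
lemma prim_idem_generating:
  assumes B: "B \<subseteq> coords"
  shows "(\<Sum>j\<le>D. (\<Sum>v\<in>words. prim_idem D q j f v * char_kernel (word_support D v) B) * z ^ j)
       = z ^ card B * (\<Sum>u\<in>words. f u * char_kernel (word_support D u) B)"
proof -
  let ?K = "\<lambda>v. char_kernel (word_support D v) B"
  have "(\<Sum>j\<le>D. (\<Sum>v\<in>words. prim_idem D q j f v * ?K v) * z ^ j)
      = (\<Sum>j\<le>D. \<Sum>v\<in>words. \<Sum>u\<in>words. f u * (krawtchouk D q j (hdist D v u) * z ^ j * ?K v) / qc ^ D)"
    unfolding prim_idem_def
    by (intro sum.cong refl) (simp add: sum_distrib_left sum_distrib_right sum_divide_distrib mult_ac)
  also have "\<dots> = (\<Sum>u\<in>words. \<Sum>v\<in>words. \<Sum>j\<le>D. f u * (krawtchouk D q j (hdist D v u) * z ^ j * ?K v) / qc ^ D)"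
    by (subst sum.swap, subst (2) sum.swap, subst sum.swap) (rule refl)
  also have "\<dots> = (\<Sum>u\<in>words. f u * (\<Sum>v\<in>words. (\<Sum>j\<le>D. krawtchouk D q j (hdist D v u) * z ^ j) * ?K v) / qc ^ D)"
    by (simp add: sum_distrib_left sum_distrib_right sum_divide_distrib mult_ac)
  also have "\<dots> = (\<Sum>u\<in>words. f u * (qc ^ D * z ^ card B * ?K u) / qc ^ D)"
    by (intro sum.cong refl)
       (simp add: krawtchouk_generating_hdist sum_words_kernel[OF _ B, symmetric] cong: sum.cong)
  also have "\<dots> = z ^ card B * (\<Sum>u\<in>words. f u * ?K u)"
    using qc_nonzero by (simp add: sum_distrib_left mult_ac)
  finally show ?thesis .
qed

lemma prim_idem_zero_imp:
  assumes B: "B \<subseteq> coords" and zero: "prim_idem D q (card B) f = (\<lambda>_. 0)"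
  shows "(\<Sum>u\<in>words. f u * char_kernel (word_support D u) B) = 0"
proof -
  define P where "P = (\<Sum>u\<in>words. f u * char_kernel (word_support D u) B)"
  define c where "c j = (\<Sum>v\<in>words. prim_idem D q j f v * char_kernel (word_support D v) B)" for j
  have "(\<Sum>j\<le>D. (c j - (if j = card B then P else 0)) * z ^ j) = 0" for z
  proof -
    have "(\<Sum>j\<le>D. (if j = card B then P else 0) * z ^ j) = (\<Sum>j\<le>D. if j = card B then P * z ^ j else 0)"
      by (intro sum.cong) auto
    also have "\<dots> = P * z ^ card B" using card_le_D[OF B] by (simp add: sum.delta)
    finally show ?thesis
      using prim_idem_generating[OF B, of f z] unfolding c_def P_def by (simp add: algebra_simps sum_subtractf)
  qed
  then have "c (card B) - P = 0"
    using polyfun_eq_0[of "\<lambda>j. c j - (if j = card B then P else 0)" D] card_le_D[OF B] by auto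
  moreover have "c (card B) = 0" unfolding c_def using zero by simp
  ultimately show ?thesis unfolding P_def by simp
qed

definition support_count :: "(nat \<Rightarrow> nat) set \<Rightarrow> nat set \<Rightarrow> complex" where
  "support_count Y A = of_nat (card {y \<in> Y. word_support D y = A})"

lemma word_support_subset: "word_support D y \<subseteq> coords"
  unfolding word_support_def by auto

lemma word_support_empty_iff:
  assumes "y \<in> words"
  shows "word_support D y = {} \<longleftrightarrow> y = (\<lambda>_. 0)"
proof
  assume "word_support D y = {}"
  then have "y i = 0" for i
    using assms by (cases "i < D") (auto simp: word_support_def hamming_space_def)
  then show "y = (\<lambda>_. 0)" by auto
qed (simp add: word_support_def)

lemma hdist_zero_word: "hdist D (\<lambda>_. 0) y = card (word_support D y)"
  unfolding hdist_def word_support_def by (metis (mono_tags, lifting))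

lemma char_kernel_empty: "char_kernel A {} = 1"
  unfolding char_kernel_def char1_def by simp

lemma sum_support_count:
  assumes "finite Y" "\<A> \<subseteq> Pow coords"
  shows "(\<Sum>A\<in>\<A>. support_count Y A) = of_nat (card {y \<in> Y. word_support D y \<in> \<A>})"
proof -
  let ?S = "{y \<in> Y. word_support D y \<in> \<A>}"
  have "card ?S = (\<Sum>A\<in>\<A>. \<Sum>y\<in>{y \<in> ?S. word_support D y = A}. 1)"
    by (subst sum.group) (use assms in \<open>auto intro: finite_subset\<close>)
  also have "\<dots> = (\<Sum>A\<in>\<A>. card {y \<in> Y. word_support D y = A})"
    by (intro sum.cong refl) (auto intro!: arg_cong[where f=card])
  finally show ?thesis unfolding support_count_def by simp
qed

lemma transform_support_count:
  assumes "Y \<subseteq> words"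
  shows "(\<Sum>u\<in>words. char_vec D q Y u * char_kernel (word_support D u) B) = transform (support_count Y) B"
proof -
  have "finite Y" using finite_subset[OF assms finite_words] .
  have "(\<Sum>u\<in>words. char_vec D q Y u * char_kernel (word_support D u) B)
      = (\<Sum>u\<in>words. if u \<in> Y then char_kernel (word_support D u) B else 0)"
    unfolding char_vec_def by (intro sum.cong refl) auto
  also have "\<dots> = (\<Sum>u\<in>{u \<in> words. u \<in> Y}. char_kernel (word_support D u) B)"
    by (rule sum.inter_filter[OF finite_words, symmetric])
  also have "{u \<in> words. u \<in> Y} = Y" using assms by auto
  also have "(\<Sum>u\<in>Y. char_kernel (word_support D u) B) = (\<Sum>A\<in>Pow coords. \<Sum>u\<in>{u \<in> Y. word_support D u = A}. char_kernel (word_support D u) B)"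
    by (rule sum.group[symmetric]) (use \<open>finite Y\<close> word_support_subset in auto)
  also have "\<dots> = transform (support_count Y) B"
    unfolding transform_def support_count_def by (intro sum.cong refl) simp
  finally show ?thesis .
qed

lemma support_count_level_zero:
  assumes "dual_idem D q (\<lambda>_. 0) i (char_vec D q Y) = (\<lambda>_. 0)" "Y \<subseteq> words" "card A = i"
  shows "support_count Y A = 0"
proof (rule ccontr)
  assume "support_count Y A \<noteq> 0"
  then obtain y where "y \<in> Y" "word_support D y = A"
    unfolding support_count_def by (metis (mono_tags, lifting) Collect_empty_eq card.empty of_nat_0)
  then have "dual_idem D q (\<lambda>_. 0) i (char_vec D q Y) y = 1"
    using assms(2,3) by (auto simp: dual_idem_def char_vec_def hdist_zero_word)
  then show False using assms(1) by simp
qed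

lemma transform_support_count_level_zero:
  assumes "prim_idem D q j (char_vec D q Y) = (\<lambda>_. 0)" "Y \<subseteq> words" "B \<subseteq> coords" "card B = j"
  shows "transform (support_count Y) B = 0"
  using prim_idem_zero_imp[OF assms(3), of "char_vec D q Y"] assms(1,4) transform_support_count[OF assms(2)]
  by simp

lemma dual_idem_zero_below_delta_x:
  assumes Y: "Y \<subseteq> words" "1 < card Y"
    and i: "1 \<le> i" "i < delta_x D q (\<lambda>_. 0) (char_vec D q Y)"
  shows "dual_idem D q (\<lambda>_. 0) i (char_vec D q Y) = (\<lambda>_. 0)"
proof -
  let ?P = "\<lambda>i. i \<noteq> 0 \<and> i \<le> D \<and> dual_idem D q (\<lambda>_. 0) i (char_vec D q Y) \<noteq> (\<lambda>_. 0)"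
  have "\<not> Y \<subseteq> {\<lambda>_. 0}" using Y(2) card_mono[of "{\<lambda>_. 0}" Y] by auto
  then obtain y where y: "y \<in> Y" "y \<noteq> (\<lambda>_. 0)" by blast
  then have "word_support D y \<noteq> {}" using Y(1) word_support_empty_iff by blast
  moreover have "dual_idem D q (\<lambda>_. 0) (card (word_support D y)) (char_vec D q Y) y = 1"
    using y Y(1) by (auto simp: dual_idem_def char_vec_def hdist_zero_word)
  ultimately have "?P (card (word_support D y))"
    using card_le_D[OF word_support_subset] finite_subset[OF word_support_subset] by force
  then have "?P (delta_x D q (\<lambda>_. 0) (char_vec D q Y))"
    unfolding delta_x_def by (rule LeastI)
  then show ?thesis
    using not_less_Least[of i ?P] i unfolding delta_x_def by auto
qed

lemma transform_empty: "transform F {} = (\<Sum>A\<in>Pow coords. F A)"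
  by (simp add: transform_def char_kernel_empty)

text \<open>If \<open>E\<^sub>j \<chi>\<^sub>Y = 0\<close> for all \<open>j \<noteq> 0\<close>, the transform of the support counts is concentrated on the
  empty set, which forces Y to be empty or all of X.\<close>
lemma prim_idem_nonzero_exists:
  assumes Y: "Y \<subseteq> words" "1 < card Y" "card Y < card words"
  shows "\<exists>j. j \<noteq> 0 \<and> j \<le> D \<and> prim_idem D q j (char_vec D q Y) \<noteq> (\<lambda>_. 0)"
proof (rule ccontr)
  assume none: "\<not> ?thesis"
  have zero: "transform (support_count Y) B = 0" if "B \<in> Pow coords - {{}}" for B
  proof -
    from that have B: "B \<subseteq> coords" "card B \<noteq> 0" by (auto simp: finite_subset[of _ coords])
    then have "prim_idem D q (card B) (char_vec D q Y) = (\<lambda>_. 0)" using none card_le_D by blast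
    then show ?thesis using transform_support_count_level_zero Y(1) B(1) by blast
  qed
  have "qc ^ D * support_count Y {} = transform (transform (support_count Y)) {}"
    by (simp add: transform_transform)
  also have "\<dots> = transform (support_count Y) {}"
    unfolding transform_empty[of "transform (support_count Y)"]
    by (subst sum.remove[of _ "{}"]) (auto simp: zero)
  also have "\<dots> = of_nat (card Y)"
    using sum_support_count[OF finite_subset[OF Y(1) finite_words], of "Pow coords"]
    by (simp add: transform_empty word_support_subset)
  finally have "of_nat (q ^ D * card {y \<in> Y. word_support D y = {}}) = (of_nat (card Y) :: complex)"
    unfolding support_count_def by simp
  then have count: "q ^ D * card {y \<in> Y. word_support D y = {}} = card Y"
    by (simp only: of_nat_eq_iff)
  have "{y \<in> Y. word_support D y = {}} \<subseteq> {\<lambda>_. 0}"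
    using Y(1) word_support_empty_iff by auto
  then have "card {y \<in> Y. word_support D y = {}} \<le> card {\<lambda>_::nat. 0::nat}"
    by (intro card_mono) auto
  then consider "card {y \<in> Y. word_support D y = {}} = 0" | "card {y \<in> Y. word_support D y = {}} = 1"
    by fastforce
  then show False using count Y(2,3) card_words by cases auto
qed

lemma prim_idem_zero_below_delta_star:
  assumes Y: "Y \<subseteq> words" "1 < card Y" "card Y < card words"
    and j: "1 \<le> j" "j < delta_star D q (char_vec D q Y)"
  shows "prim_idem D q j (char_vec D q Y) = (\<lambda>_. 0)"
proof -
  let ?P = "\<lambda>j. j \<noteq> 0 \<and> j \<le> D \<and> prim_idem D q j (char_vec D q Y) \<noteq> (\<lambda>_. 0)"
  have "?P (delta_star D q (char_vec D q Y))"
    unfolding delta_star_def by (rule LeastI_ex[OF prim_idem_nonzero_exists[OF Y]])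
  then show ?thesis
    using not_less_Least[of j ?P] j unfolding delta_star_def by auto
qed

lemma level_sums_vanish_of_delta_x_bound:
  assumes Y: "Y \<subseteq> words" "1 < card Y" and ps: "disjoint_pairs ps" "1 \<le> length ps"
    and bound: "card {j. length ps \<le> j \<and> j \<le> D - length ps \<and> prim_idem D q j (char_vec D q Y) \<noteq> (\<lambda>_. 0)}
                  + length ps \<le> delta_x D q (\<lambda>_. 0) (char_vec D q Y)"
  shows "level_sum ps (antisymmetrize ps (support_count Y)) k = 0"
proof (rule level_sums_antisymmetrize_vanish[OF ps])
  let ?J = "{j. length ps \<le> j \<and> j \<le> D - length ps \<and> prim_idem D q j (char_vec D q Y) \<noteq> (\<lambda>_. 0)}"
  fix A assume "A \<subseteq> coords" "1 \<le> card A" "card A < length ps + card ?J"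
  then have "dual_idem D q (\<lambda>_. 0) (card A) (char_vec D q Y) = (\<lambda>_. 0)"
    using bound dual_idem_zero_below_delta_x[OF Y] by simp
  then show "support_count Y A = 0" using support_count_level_zero[OF _ Y(1) refl] by blast
next
  let ?J = "{j. length ps \<le> j \<and> j \<le> D - length ps \<and> prim_idem D q j (char_vec D q Y) \<noteq> (\<lambda>_. 0)}"
  have "{j. length ps \<le> j \<and> j \<le> D - length ps \<and> (\<exists>B\<subseteq>coords. card B = j \<and> transform (support_count Y) B \<noteq> 0)}
      \<subseteq> ?J"
    using transform_support_count_level_zero[OF _ Y(1)] by blast
  then show "card {j. length ps \<le> j \<and> j \<le> D - length ps \<and>
      (\<exists>B\<subseteq>coords. card B = j \<and> transform (support_count Y) B \<noteq> 0)} \<le> card ?J"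
    by (intro card_mono) auto
qed

lemma level_sums_vanish_of_delta_star_bound:
  assumes Y: "Y \<subseteq> words" "1 < card Y" "card Y < card words" and ps: "disjoint_pairs ps" "1 \<le> length ps"
    and bound: "card {i. length ps \<le> i \<and> i \<le> D - length ps \<and> dual_idem D q (\<lambda>_. 0) i (char_vec D q Y) \<noteq> (\<lambda>_. 0)}
                  + length ps \<le> delta_star D q (char_vec D q Y)"
  shows "level_sum ps (antisymmetrize ps (support_count Y)) k = 0"
proof (rule level_sums_antisymmetrize_vanish_dual[OF ps])
  let ?I = "{i. length ps \<le> i \<and> i \<le> D - length ps \<and> dual_idem D q (\<lambda>_. 0) i (char_vec D q Y) \<noteq> (\<lambda>_. 0)}"
  fix B assume B: "B \<subseteq> coords" "1 \<le> card B" "card B < length ps + card ?I"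
  then have "prim_idem D q (card B) (char_vec D q Y) = (\<lambda>_. 0)"
    using bound prim_idem_zero_below_delta_star[OF Y] by simp
  then show "transform (support_count Y) B = 0"
    using transform_support_count_level_zero[OF _ Y(1) B(1) refl] by blast
next
  let ?I = "{i. length ps \<le> i \<and> i \<le> D - length ps \<and> dual_idem D q (\<lambda>_. 0) i (char_vec D q Y) \<noteq> (\<lambda>_. 0)}"
  have "{i. length ps \<le> i \<and> i \<le> D - length ps \<and> (\<exists>A\<subseteq>coords. card A = i \<and> support_count Y A \<noteq> 0)} \<subseteq> ?I"
    using support_count_level_zero[OF _ Y(1)] by blast
  then show "card {i. length ps \<le> i \<and> i \<le> D - length ps \<and> (\<exists>A\<subseteq>coords. card A = i \<and> support_count Y A \<noteq> 0)}
      \<le> card ?I"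
    by (intro card_mono) auto
qed

lemma level_sums_vanish_of_hypothesis:
  assumes Y: "Y \<subseteq> words" "1 < card Y" "card Y < card words" and ps: "disjoint_pairs ps" "1 \<le> length ps"
    and "int (card {j. length ps \<le> j \<and> j \<le> D - length ps \<and> prim_idem D q j (char_vec D q Y) \<noteq> (\<lambda>_. 0)})
           \<le> int (delta_x D q (\<lambda>_. 0) (char_vec D q Y)) - int (length ps)
      \<or> int (card {i. length ps \<le> i \<and> i \<le> D - length ps \<and> dual_idem D q (\<lambda>_. 0) i (char_vec D q Y) \<noteq> (\<lambda>_. 0)})
           \<le> int (delta_star D q (char_vec D q Y)) - int (length ps)"
  shows "level_sum ps (antisymmetrize ps (support_count Y)) k = 0"
  using assms(6)
proof
  assume "int (card {j. length ps \<le> j \<and> j \<le> D - length ps \<and> prim_idem D q j (char_vec D q Y) \<noteq> (\<lambda>_. 0)})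
    \<le> int (delta_x D q (\<lambda>_. 0) (char_vec D q Y)) - int (length ps)"
  then show ?thesis by (intro level_sums_vanish_of_delta_x_bound[OF Y(1,2) ps]) linarith
next
  assume "int (card {i. length ps \<le> i \<and> i \<le> D - length ps \<and> dual_idem D q (\<lambda>_. 0) i (char_vec D q Y) \<noteq> (\<lambda>_. 0)})
    \<le> int (delta_star D q (char_vec D q Y)) - int (length ps)"
  then show ?thesis by (intro level_sums_vanish_of_delta_star_bound[OF Y ps]) linarith
qed

lemma placed_sum_support_count:
  assumes "finite Y"
  shows "placed_sum avoid [] (support_count Y) S k
       = of_nat (card {y \<in> Y. hweight D y = k \<and> placed avoid S (word_support D y)})"
proof -
  have "placed_sum avoid [] (support_count Y) S k
      = of_nat (card {y \<in> Y. word_support D y \<in> {A \<in> adapted_level [] k. placed avoid S A}})"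
    unfolding placed_sum_def
    by (rule sum_support_count[OF assms]) (auto simp: adapted_level_def adapted_def)
  also have "{y \<in> Y. word_support D y \<in> {A \<in> adapted_level [] k. placed avoid S A}}
      = {y \<in> Y. hweight D y = k \<and> placed avoid S (word_support D y)}"
    using word_support_subset by (auto simp: adapted_level_def adapted_def hweight_def)
  finally show ?thesis .
qed

lemma placed_counts_constant:
  assumes Y: "Y \<subseteq> words" "1 < card Y" "card Y < card words" and "1 \<le> t"
    and hyp: "\<forall>r. 1 \<le> r \<and> r \<le> t \<longrightarrow>
           int (card {j. r \<le> j \<and> j \<le> D - r \<and> prim_idem D q j (char_vec D q Y) \<noteq> (\<lambda>_. 0)})
              \<le> int (delta_x D q (\<lambda>_. 0) (char_vec D q Y)) - int r
         \<or> int (card {i. r \<le> i \<and> i \<le> D - r \<and> dual_idem D q (\<lambda>_. 0) i (char_vec D q Y) \<noteq> (\<lambda>_. 0)})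
              \<le> int (delta_star D q (char_vec D q Y)) - int r"
    and S: "S \<subseteq> coords" "card S = t" "S' \<subseteq> coords" "card S' = t"
  shows "card {y \<in> Y. hweight D y = k \<and> placed avoid S (word_support D y)}
       = card {y \<in> Y. hweight D y = k \<and> placed avoid S' (word_support D y)}"
proof -
  have "placed_sum avoid [] (support_count Y) S k = placed_sum avoid [] (support_count Y) S' k"
    using level_sums_vanish_of_hypothesis[OF Y] hyp by (intro placed_sum_constant[OF _ \<open>1 \<le> t\<close> S]) blast
  then show ?thesis
    using placed_sum_support_count[OF finite_subset[OF Y(1) finite_words]] by simp
qed

end

theorem mainTheorem13:
  fixes D q t :: nat and Y :: "(nat \<Rightarrow> nat) set"
  assumes "D \<ge> 1" and "q \<ge> 2"
    and "Y \<subseteq> hamming_space D q"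
    and "1 < card Y" and "card Y < card (hamming_space D q)"
    and "1 \<le> t" and "t \<le> D"
    and "\<forall>r. 1 \<le> r \<and> r \<le> t \<longrightarrow>
           int (card {j. r \<le> j \<and> j \<le> D - r \<and> prim_idem D q j (char_vec D q Y) \<noteq> (\<lambda>_. 0)})
              \<le> int (delta_x D q (\<lambda>_. 0) (char_vec D q Y)) - int r
         \<or> int (card {i. r \<le> i \<and> i \<le> D - r \<and> dual_idem D q (\<lambda>_. 0) i (char_vec D q Y) \<noteq> (\<lambda>_. 0)})
              \<le> int (delta_star D q (char_vec D q Y)) - int r"
  shows "\<forall>k\<le>D.
           (\<exists>c. \<forall>S. S \<subseteq> {0..<D} \<and> card S = t \<longrightarrow>
              card {y\<in>Y. hweight D y = k \<and> word_support D y \<inter> S = {}} = c)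
         \<and> is_t_design {0..<D} t {y\<in>Y. hweight D y = k} (word_support D)"
proof -
  interpret support_scheme D q by unfold_locales (rule assms(2))
  have count_eq: "card {y \<in> Y. hweight D y = k \<and> placed avoid S (word_support D y)}
      = card {y \<in> Y. hweight D y = k \<and> placed avoid S' (word_support D y)}"
    if "S \<subseteq> {0..<D}" "card S = t" "S' \<subseteq> {0..<D}" "card S' = t" for avoid S S' k
    using placed_counts_constant[OF assms(3-6,8) that] .
  show ?thesis
  proof (intro allI impI conjI)
    fix k
    show "\<exists>c. \<forall>S. S \<subseteq> {0..<D} \<and> card S = t \<longrightarrow>
        card {y \<in> Y. hweight D y = k \<and> word_support D y \<inter> S = {}} = c"
    proof (intro exI allI impI)
      fix S assume S: "S \<subseteq> {0..<D} \<and> card S = t"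
      moreover have "{0..<t} \<subseteq> {0..<D}" "card {0..<t} = t" using assms(7) by auto
      ultimately show "card {y \<in> Y. hweight D y = k \<and> word_support D y \<inter> S = {}}
          = card {y \<in> Y. hweight D y = k \<and> word_support D y \<inter> {0..<t} = {}}"
        using count_eq[where avoid=True and S=S and S'="{0..<t}" and k=k] unfolding placed_def by simp
    qed
    have blocks: "{b \<in> {y \<in> Y. hweight D y = k}. T \<subseteq> word_support D b}
        = {y \<in> Y. hweight D y = k \<and> placed False T (word_support D y)}" for T
      by (auto simp: placed_def)
    show "is_t_design {0..<D} t {y \<in> Y. hweight D y = k} (word_support D)"
      unfolding is_t_design_def blocks
      using count_eq[where avoid=False and k=k] by blast
  qed
qed

end
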